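(* Let $G=H(T,C)$ be a generalized Halin graph such that $\kappa_{LLY}(u,v)>0$ for every edge $\{u,v\}$ of $G$. Let $x$ be a vertex of $T$ of maximum degree $D(T)$, and consider the connected components of $T-\{x\}$. For any two vertices $p,q$ that are adjacent on $C$ and lie in different components of $T-\{x\}$, we have $d_T(x,p)+d_T(x,q)\le 4$.
   Context: All graphs are finite, simple, undirected and connected; $d(\cdot,\cdot)$ is the shortest-path distance in $G$, $d_T(\cdot,\cdot)$ the distance in the tree $T$, and $d_v$ the degree of $v$. Lin-Lu-Yau curvature: for a vertex $v$ and $\alpha\in[0,1]$ let $m_v^\alpha(v)=\alpha$, $m_v^\alpha(u)=(1-\alpha)/d_v$ for neighbors $u$ of $v$, and $0$ elsewhere. For probability measures $m_1,m_2$, $W(m_1,m_2)=\inf_\pi\sum_{u,w}\pi(u,w)d(u,w)$ over couplings $\pi$ of $m_1,m_2$. For an edge $\{u,v\}$, $\kappa_\alpha(u,v)=1-W(m_u^\alpha,m_v^\alpha)$ and $\kappa_{LLY}(u,v)=\lim_{\alpha\to1}\kappa_\alpha(u,v)/(1-\alpha)$. A generalized Halin graph $H(T,C)$ is obtained from a tree $T$ with maximum degree $D(T)\ge3$ together with a planar embedding, by adding a cycle $C$ through all leaves of $T$ in the cyclic order in which they appear in the embedding. *)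

theory Defs
  imports "HOL-Analysis.Analysis"
begin

definition simple_graph :: "'a set \<Rightarrow> ('a \<Rightarrow> 'a \<Rightarrow> bool) \<Rightarrow> bool" where
  "simple_graph V E \<longleftrightarrow> finite V \<and> (\<forall>u v. E u v \<longrightarrow> u \<in> V \<and> v \<in> V)
     \<and> (\<forall>u v. E u v \<longrightarrow> E v u) \<and> (\<forall>u. \<not> E u u)"

definition adj_rel :: "('a \<Rightarrow> 'a \<Rightarrow> bool) \<Rightarrow> ('a \<times> 'a) set" where
  "adj_rel E = {(a, b). E a b}"

definition graph_connected :: "'a set \<Rightarrow> ('a \<Rightarrow> 'a \<Rightarrow> bool) \<Rightarrow> bool" where
  "graph_connected V E \<longleftrightarrow> (\<forall>u\<in>V. \<forall>v\<in>V. (u, v) \<in> (adj_rel E)\<^sup>*)"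

definition is_cycle :: "('a \<Rightarrow> 'a \<Rightarrow> bool) \<Rightarrow> 'a list \<Rightarrow> bool" where
  "is_cycle E cs \<longleftrightarrow> length cs \<ge> 3 \<and> distinct cs
     \<and> (\<forall>i < length cs. E (cs ! i) (cs ! ((i + 1) mod length cs)))"

definition is_tree :: "'a set \<Rightarrow> ('a \<Rightarrow> 'a \<Rightarrow> bool) \<Rightarrow> bool" where
  "is_tree V E \<longleftrightarrow> simple_graph V E \<and> V \<noteq> {} \<and> graph_connected V E \<and> \<not> (\<exists>cs. is_cycle E cs)"

definition nbrs :: "('a \<Rightarrow> 'a \<Rightarrow> bool) \<Rightarrow> 'a \<Rightarrow> 'a set" where
  "nbrs E v = {u. E v u}"

definition deg :: "('a \<Rightarrow> 'a \<Rightarrow> bool) \<Rightarrow> 'a \<Rightarrow> nat" where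
  "deg E v = card (nbrs E v)"

definition max_deg :: "'a set \<Rightarrow> ('a \<Rightarrow> 'a \<Rightarrow> bool) \<Rightarrow> nat" where
  "max_deg V E = Max (deg E ` V)"

text \<open>Shortest-path distance (graphs considered are connected).\<close>
definition gdist :: "('a \<Rightarrow> 'a \<Rightarrow> bool) \<Rightarrow> 'a \<Rightarrow> 'a \<Rightarrow> nat" where
  "gdist E u v = (LEAST n. (u, v) \<in> (adj_rel E) ^^ n)"

definition is_leaf :: "('a \<Rightarrow> 'a \<Rightarrow> bool) \<Rightarrow> 'a \<Rightarrow> bool" where
  "is_leaf E v \<longleftrightarrow> deg E v = 1"

text \<open>A planar embedding of a tree is (combinatorially) a rotation system:
  at every vertex v a cyclic permutation rot v of the neighbours of v.\<close>
definition rotation_system :: "'a set \<Rightarrow> ('a \<Rightarrow> 'a \<Rightarrow> bool) \<Rightarrow> ('a \<Rightarrow> 'a \<Rightarrow> 'a) \<Rightarrow> bool" where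
  "rotation_system V E rot \<longleftrightarrow> (\<forall>v\<in>V. bij_betw (rot v) (nbrs E v) (nbrs E v)
      \<and> (\<forall>u\<in>nbrs E v. \<forall>w\<in>nbrs E v. \<exists>n. (rot v ^^ n) u = w))"

text \<open>One step of the boundary (face) walk on darts.\<close>
definition face_step :: "('a \<Rightarrow> 'a \<Rightarrow> 'a) \<Rightarrow> 'a \<times> 'a \<Rightarrow> 'a \<times> 'a" where
  "face_step rot d = (snd d, rot (snd d) (fst d))"

definition next_leaf :: "('a \<Rightarrow> 'a \<Rightarrow> bool) \<Rightarrow> ('a \<Rightarrow> 'a \<Rightarrow> 'a) \<Rightarrow> 'a \<Rightarrow> 'a" where
  "next_leaf E rot l =
     (let d0 = (l, THE u. E l u);
          n = (LEAST n. n \<ge> 1 \<and> is_leaf E (fst ((face_step rot ^^ n) d0)))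
      in fst ((face_step rot ^^ n) d0))"

text \<open>Edges of the cycle C through the leaves in their cyclic order.\<close>
definition cycle_edge :: "('a \<Rightarrow> 'a \<Rightarrow> bool) \<Rightarrow> ('a \<Rightarrow> 'a \<Rightarrow> 'a) \<Rightarrow> 'a \<Rightarrow> 'a \<Rightarrow> bool" where
  "cycle_edge E rot u v \<longleftrightarrow> is_leaf E u \<and> is_leaf E v \<and> (next_leaf E rot u = v \<or> next_leaf E rot v = u)"

definition gen_halin :: "'a set \<Rightarrow> ('a \<Rightarrow> 'a \<Rightarrow> bool) \<Rightarrow> ('a \<Rightarrow> 'a \<Rightarrow> 'a) \<Rightarrow> bool" where
  "gen_halin V ET rot \<longleftrightarrow> is_tree V ET \<and> max_deg V ET \<ge> 3 \<and> rotation_system V ET rot"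

definition halin_edges :: "('a \<Rightarrow> 'a \<Rightarrow> bool) \<Rightarrow> ('a \<Rightarrow> 'a \<Rightarrow> 'a) \<Rightarrow> 'a \<Rightarrow> 'a \<Rightarrow> bool" where
  "halin_edges ET rot u v \<longleftrightarrow> ET u v \<or> cycle_edge ET rot u v"

definition lazy_measure :: "('a \<Rightarrow> 'a \<Rightarrow> bool) \<Rightarrow> real \<Rightarrow> 'a \<Rightarrow> 'a \<Rightarrow> real" where
  "lazy_measure E \<alpha> v w = (if w = v then \<alpha> else if E v w then (1 - \<alpha>) / real (deg E v) else 0)"

definition is_coupling :: "'a set \<Rightarrow> ('a \<Rightarrow> real) \<Rightarrow> ('a \<Rightarrow> real) \<Rightarrow> ('a \<Rightarrow> 'a \<Rightarrow> real) \<Rightarrow> bool" where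
  "is_coupling V m1 m2 \<pi> \<longleftrightarrow> (\<forall>a b. \<pi> a b \<ge> 0) \<and> (\<forall>a b. \<pi> a b \<noteq> 0 \<longrightarrow> a \<in> V \<and> b \<in> V)
     \<and> (\<forall>a\<in>V. (\<Sum>b\<in>V. \<pi> a b) = m1 a) \<and> (\<forall>b\<in>V. (\<Sum>a\<in>V. \<pi> a b) = m2 b)"

definition wasserstein :: "'a set \<Rightarrow> ('a \<Rightarrow> 'a \<Rightarrow> bool) \<Rightarrow> ('a \<Rightarrow> real) \<Rightarrow> ('a \<Rightarrow> real) \<Rightarrow> real" where
  "wasserstein V E m1 m2 =
     Inf {(\<Sum>a\<in>V. \<Sum>b\<in>V. \<pi> a b * real (gdist E a b)) | \<pi>. is_coupling V m1 m2 \<pi>}"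

definition kappa_alpha :: "'a set \<Rightarrow> ('a \<Rightarrow> 'a \<Rightarrow> bool) \<Rightarrow> real \<Rightarrow> 'a \<Rightarrow> 'a \<Rightarrow> real" where
  "kappa_alpha V E \<alpha> u v = 1 - wasserstein V E (lazy_measure E \<alpha> u) (lazy_measure E \<alpha> v)"

definition kappa_LLY :: "'a set \<Rightarrow> ('a \<Rightarrow> 'a \<Rightarrow> bool) \<Rightarrow> 'a \<Rightarrow> 'a \<Rightarrow> real" where
  "kappa_LLY V E u v = Lim (at_left 1) (\<lambda>\<alpha>. kappa_alpha V E \<alpha> u v / (1 - \<alpha>))"

end

theory Submission
  imports Defs
begin

text \<open>
  The boundary of
  the embedded tree, followed from \<open>p\<close> to the next leaf \<open>q\<close>, runs along the tree path \<open>W\<close> from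
  \<open>p\<close> to \<open>q\<close>, which therefore passes through \<open>x\<close>; it suffices to show that \<open>W\<close> has at most
  four edges. Otherwise some edge of the Halin graph has non-positive curvature, which is detected
  by a potential that is 1-Lipschitz near the edge and drops by 1 both between the endpoints and
  between the averages over their neighbourhoods. Which edge is flat depends on the leaves \<open>s\<close>
  before \<open>p\<close> and \<open>r\<close> after \<open>q\<close>. If the boundary walk from \<open>s\<close> or from \<open>q\<close> retraces \<open>W\<close> through
  \<open>x\<close>, the retraced vertices have degree two, and the edge from \<open>x\<close> into a long run of them is
  flat. Otherwise \<open>p\<close> and \<open>q\<close> have degree three with far-apart other neighbours, and the cycle
  edge \<open>pq\<close> is flat.
\<close>

lemma gdist_le_1: "E a b \<Longrightarrow> gdist E a b \<le> 1"
  unfolding gdist_def by (rule Least_le) (simp add: adj_rel_def)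

lemma gdist_self [simp]: "gdist E a a = 0"
  unfolding gdist_def by (rule Least_eq_0) simp

lemma relpow_gdist: "(a, b) \<in> (adj_rel E)\<^sup>* \<Longrightarrow> (a, b) \<in> adj_rel E ^^ gdist E a b"
  unfolding gdist_def by (rule LeastI_ex) (simp add: rtrancl_power)

lemma gdist_ge_1:
  assumes "(a, b) \<in> (adj_rel E)\<^sup>*" "a \<noteq> b"
  shows "1 \<le> gdist E a b"
  using relpow_gdist[OF assms(1)] assms(2) by (cases "gdist E a b") auto

lemma gdist_ge_2:
  assumes "(a, b) \<in> (adj_rel E)\<^sup>*" "a \<noteq> b" "\<not> E a b"
  shows "2 \<le> gdist E a b"
proof (rule ccontr)
  assume "\<not> 2 \<le> gdist E a b"
  then have "gdist E a b \<le> 1" by simp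
  with gdist_ge_1[OF assms(1,2)] have "gdist E a b = 1" by simp
  then show False using relpow_gdist[OF assms(1)] assms(3) by (simp add: adj_rel_def)
qed

lemma gdist_ge_3:
  assumes "(a, b) \<in> (adj_rel E)\<^sup>*" "a \<noteq> b" "\<not> E a b"
    and no_common_nbr: "\<And>z. E a z \<Longrightarrow> E z b \<Longrightarrow> False"
  shows "3 \<le> gdist E a b"
proof (rule ccontr)
  assume "\<not> 3 \<le> gdist E a b"
  with gdist_ge_2[OF assms(1-3)] have "gdist E a b = Suc (Suc 0)" by simp
  then have "(a, b) \<in> adj_rel E ^^ Suc (Suc 0)" using relpow_gdist[OF assms(1)] by simp
  then obtain z where "(a, z) \<in> adj_rel E" "(z, b) \<in> adj_rel E"
    by (auto elim!: relpow_Suc_E2)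
  then show False using no_common_nbr by (auto simp: adj_rel_def)
qed

lemma connected_gdist_ge_1:
  "graph_connected V E \<Longrightarrow> a \<in> V \<Longrightarrow> b \<in> V \<Longrightarrow> a \<noteq> b \<Longrightarrow> 1 \<le> gdist E a b"
  unfolding graph_connected_def by (metis gdist_ge_1)

definition is_walk :: "('a \<Rightarrow> 'a \<Rightarrow> bool) \<Rightarrow> (nat \<Rightarrow> 'a) \<Rightarrow> nat \<Rightarrow> bool" where
  "is_walk E f n \<longleftrightarrow> (\<forall>i<n. E (f i) (f (Suc i)))"

definition is_path :: "('a \<Rightarrow> 'a \<Rightarrow> bool) \<Rightarrow> (nat \<Rightarrow> 'a) \<Rightarrow> nat \<Rightarrow> bool" where
  "is_path E f n \<longleftrightarrow> is_walk E f n \<and> inj_on f {..n}"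

definition edges_avoiding :: "('a \<Rightarrow> 'a \<Rightarrow> bool) \<Rightarrow> 'a \<Rightarrow> ('a \<times> 'a) set" where
  "edges_avoiding E x = {(a, b). E a b \<and> a \<noteq> x \<and> b \<noteq> x}"

lemma is_path_inj: "is_path E f n \<Longrightarrow> a \<le> n \<Longrightarrow> b \<le> n \<Longrightarrow> f a = f b \<Longrightarrow> a = b"
  by (auto simp: is_path_def inj_on_def)

lemma is_path_shift:
  assumes "is_path E f n" "i \<le> k" "k \<le> n"
  shows "is_path E (\<lambda>t. f (i + t)) (k - i)"
proof -
  have "is_walk E (\<lambda>t. f (i + t)) (k - i)"
    using assms by (auto simp: is_path_def is_walk_def)
  moreover have "inj_on (\<lambda>t. f (i + t)) {..k - i}"
  proof (rule inj_onI)
    fix a b assume "a \<in> {..k - i}" "b \<in> {..k - i}" "f (i + a) = f (i + b)"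
    then show "a = b" using is_path_inj[OF assms(1), of "i + a" "i + b"] assms(2,3) by auto
  qed
  ultimately show ?thesis by (simp add: is_path_def)
qed

lemma is_path_restrict: "is_path E f n \<Longrightarrow> k \<le> n \<Longrightarrow> is_path E f k"
  unfolding is_path_def is_walk_def inj_on_def by auto

lemma is_path_rev:
  assumes p: "is_path E f n" and sym: "\<And>a b. E a b \<Longrightarrow> E b a"
  shows "is_path E (\<lambda>t. f (n - t)) n"
  unfolding is_path_def is_walk_def
proof (intro conjI allI impI inj_onI)
  fix i assume "i < n"
  then have "E (f (n - Suc i)) (f (Suc (n - Suc i)))" and "Suc (n - Suc i) = n - i"
    using p by (auto simp: is_path_def is_walk_def)
  then show "E (f (n - i)) (f (n - Suc i))" using sym by metis
next
  fix a b assume "a \<in> {..n}" "b \<in> {..n}" "f (n - a) = f (n - b)"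
  then show "a = b" using is_path_inj[OF p, of "n - a" "n - b"] by auto
qed

lemma rtrancl_edges_avoiding_sym:
  assumes "symp E" "(a, b) \<in> (edges_avoiding E x)\<^sup>*"
  shows "(b, a) \<in> (edges_avoiding E x)\<^sup>*"
proof -
  have "sym ((edges_avoiding E x)\<^sup>*)"
    using assms(1) by (intro sym_rtrancl) (auto simp: sym_def symp_def edges_avoiding_def)
  then show ?thesis using assms(2) by (rule symD)
qed

lemma walk_avoiding:
  assumes w: "is_walk E f n" and i: "i \<le> k" "k \<le> n"
    and avoid: "\<And>t. i \<le> t \<Longrightarrow> t \<le> k \<Longrightarrow> f t \<noteq> x"
  shows "(f i, f k) \<in> (edges_avoiding E x)\<^sup>*"
  using i avoid
proof (induction k rule: dec_induct)
  case (step k)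
  then have "(f k, f (Suc k)) \<in> edges_avoiding E x"
    using w by (simp add: edges_avoiding_def is_walk_def)
  with step show ?case by (simp add: rtrancl.rtrancl_into_rtrancl)
qed simp

lemma path_segment_avoiding:
  assumes p: "is_path E f n" and "a \<le> b" "b \<le> n" "k \<le> n" "b < k \<or> k < a"
  shows "(f a, f b) \<in> (edges_avoiding E (f k))\<^sup>*"
proof (rule walk_avoiding)
  show "is_walk E f n" using p by (simp add: is_path_def)
  show "f t \<noteq> f k" if "a \<le> t" "t \<le> b" for t
    using is_path_inj[OF p, of t k] that assms by auto
qed (use assms in auto)

lemma gdist_le_walk_length:
  assumes "is_walk E f n"
  shows "gdist E (f 0) (f n) \<le> n"
proof -
  have "(f 0, f k) \<in> adj_rel E ^^ k" if "k \<le> n" for k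
    using that assms by (induction k) (auto simp: adj_rel_def is_walk_def)
  then show ?thesis unfolding gdist_def by (simp add: Least_le)
qed

lemma rtrancl_imp_walk:
  assumes "(a, b) \<in> {(x, y). E x y}\<^sup>*"
  shows "\<exists>f n. is_walk E f n \<and> f 0 = a \<and> f n = b"
  using assms
proof (induction rule: rtrancl_induct)
  case base
  show ?case by (rule exI[of _ "\<lambda>_. a"], rule exI[of _ 0]) (simp add: is_walk_def)
next
  case (step y z)
  then obtain f n where f: "is_walk E f n" "f 0 = a" "f n = y" by blast
  then have "is_walk E (f(Suc n := z)) (Suc n)"
    using step(2) by (auto simp: is_walk_def less_Suc_eq)
  moreover have "(f(Suc n := z)) 0 = a" "(f(Suc n := z)) (Suc n) = z"
    using f by auto
  ultimately show ?case by blast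
qed

lemma walk_shortcut:
  assumes w: "is_walk E f n" and ik: "i < k" "k \<le> n" "f i = f k"
  defines "g \<equiv> \<lambda>t. if t \<le> i then f t else f (t + (k - i))"
  shows "is_walk E g (n - (k - i))" "g 0 = f 0" "g (n - (k - i)) = f n"
proof -
  show "is_walk E g (n - (k - i))"
    unfolding is_walk_def
  proof (intro allI impI)
    fix t assume t: "t < n - (k - i)"
    consider "t < i" | "t = i" | "i < t" by linarith
    then show "E (g t) (g (Suc t))"
    proof cases
      case 1
      then have "g t = f t" "g (Suc t) = f (Suc t)" "t < n" using ik by (auto simp: g_def)
      then show ?thesis using w by (simp add: is_walk_def)
    next
      case 2
      then have "g t = f k" "g (Suc t) = f (Suc k)" "k < n" using ik t by (auto simp: g_def)
      then show ?thesis using w by (simp add: is_walk_def)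
    next
      case 3
      then have "g t = f (t + (k - i))" "g (Suc t) = f (Suc (t + (k - i)))" "t + (k - i) < n"
        using t by (auto simp: g_def)
      then show ?thesis using w by (simp add: is_walk_def)
    qed
  qed
  show "g 0 = f 0" by (simp add: g_def)
  show "g (n - (k - i)) = f n"
    using ik by (cases "n = k") (auto simp: g_def)
qed

lemma walk_imp_path:
  assumes "is_walk E f n"
  shows "\<exists>g m. is_path E g m \<and> g 0 = f 0 \<and> g m = f n"
  using assms
proof (induction n arbitrary: f rule: less_induct)
  case (less n)
  show ?case
  proof (cases "inj_on f {..n}")
    case True
    then show ?thesis using less.prems by (auto simp: is_path_def)
  next
    case False
    then obtain i k where ik: "i < k" "k \<le> n" "f i = f k"
      unfolding inj_on_def by (metis atMost_iff linorder_neqE_nat)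
    note shortcut = walk_shortcut[OF less.prems ik]
    have "n - (k - i) < n" using ik by linarith
    from less.IH[OF this shortcut(1)] show ?thesis
      unfolding shortcut(2,3) .
  qed
qed

lemma is_path_Cons:
  assumes p: "is_path E g m" and e: "E a (g 0)" and a: "a \<notin> g ` {..m}"
  shows "is_path E (\<lambda>t. if t = 0 then a else g (t - 1)) (Suc m)"
  unfolding is_path_def is_walk_def
proof (intro conjI allI impI inj_onI)
  fix t assume "t < Suc m"
  then show "E (if t = 0 then a else g (t - 1)) (if Suc t = 0 then a else g (Suc t - 1))"
    using p e by (cases t) (auto simp: is_path_def is_walk_def)
next
  fix s t assume st: "s \<in> {..Suc m}" "t \<in> {..Suc m}"
    and eq: "(if s = 0 then a else g (s - 1)) = (if t = 0 then a else g (t - 1))"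
  have off_a: "g (r - 1) \<noteq> a" if "r \<in> {..Suc m}" for r
    using a that by (metis atMost_iff diff_le_mono diff_Suc_1 image_eqI)
  consider "s = 0" "t = 0" | "s = 0" "t \<noteq> 0" | "s \<noteq> 0" "t = 0" | "s \<noteq> 0" "t \<noteq> 0"
    by blast
  then show "s = t"
  proof cases
    case 4
    then have "g (s - 1) = g (t - 1)" using eq by simp
    then have "s - 1 = t - 1" using is_path_inj[OF p, of "s - 1" "t - 1"] st by auto
    then show ?thesis using 4 by simp
  qed (use eq off_a st in auto)
qed

locale tree_graph =
  fixes V :: "'a set" and ET :: "'a \<Rightarrow> 'a \<Rightarrow> bool"
  assumes tree: "is_tree V ET"
begin

lemma finite_V: "finite V"
  and edge_in_V: "ET a b \<Longrightarrow> a \<in> V \<and> b \<in> V"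
  and sym: "ET a b \<Longrightarrow> ET b a"
  and irrefl: "\<not> ET a a"
  and connected: "graph_connected V ET"
  and no_cycle: "\<not> is_cycle ET cs"
  using tree by (auto simp: is_tree_def simple_graph_def)

lemma symp: "symp ET"
  using sym by (rule sympI)

lemma walk_in_V:
  assumes "is_walk ET f n" "0 < n" "t \<le> n"
  shows "f t \<in> V"
proof (cases "t < n")
  case True
  then show ?thesis using assms(1) edge_in_V by (auto simp: is_walk_def)
next
  case False
  then have "t = Suc (n - 1)" "n - 1 < n" using assms(2,3) by auto
  then show ?thesis using assms(1) edge_in_V unfolding is_walk_def by metis
qed

lemma path_not_closed:
  assumes "is_path ET f n" "2 \<le> n" "ET (f n) (f 0)"
  shows False
proof -
  let ?cs = "map f [0..<Suc n]"
  have "is_cycle ET ?cs" unfolding is_cycle_def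
  proof (intro conjI allI impI)
    show "3 \<le> length ?cs" using assms by simp
    have "set [0..<Suc n] = {..n}" by auto
    then show "distinct ?cs" using assms(1) by (simp add: is_path_def distinct_map del: upt_Suc)
    fix i assume "i < length ?cs"
    then have i: "i \<le> n" by simp
    show "ET (?cs ! i) (?cs ! ((i + 1) mod length ?cs))"
    proof (cases "i = n")
      case True then show ?thesis using assms(3) by (simp del: upt_Suc)
    next
      case False
      then have "(i + 1) mod Suc n = Suc i" using i by simp
      then show ?thesis using assms(1) i False
        by (simp add: is_path_def is_walk_def nth_append del: upt_Suc)
    qed
  qed
  then show False using no_cycle by blast
qed

lemma path_no_chord:
  assumes p: "is_path ET f n" and "i \<le> n" "k \<le> n" and e: "ET (f i) (f k)"
  shows "k = Suc i \<or> i = Suc k"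
proof -
  have no_long_chord: "\<not> ET (f a) (f b)" if "a + 2 \<le> b" "b \<le> n" for a b
  proof
    assume "ET (f a) (f b)"
    moreover have "is_path ET (\<lambda>t. f (a + t)) (b - a)"
      using is_path_shift[OF p] that by simp
    moreover have "2 \<le> b - a" using that by simp
    ultimately show False
      using path_not_closed[of "\<lambda>t. f (a + t)" "b - a"] that sym by auto
  qed
  have "i \<noteq> k" using e irrefl by auto
  then show ?thesis
    using no_long_chord[of i k] no_long_chord[of k i] e sym assms(2,3) by fastforce
qed

lemma nbrs_separated:
  assumes ac: "ET a c" and ad: "ET a d" and "c \<noteq> d"
  shows "(c, d) \<notin> (edges_avoiding ET a)\<^sup>*"
proof
  let ?E = "\<lambda>x y. ET x y \<and> x \<noteq> a \<and> y \<noteq> a"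
  assume "(c, d) \<in> (edges_avoiding ET a)\<^sup>*"
  then obtain f n where "is_walk ?E f n" "f 0 = c" "f n = d"
    using rtrancl_imp_walk[of c d ?E] unfolding edges_avoiding_def by blast
  then obtain g m where g: "is_path ?E g m" "g 0 = c" "g m = d"
    using walk_imp_path by blast
  then have "0 < m" using \<open>c \<noteq> d\<close> by (cases m) auto
  have g_a: "g t \<noteq> a" if "t \<le> m" for t
  proof (cases "t < m")
    case True
    then show ?thesis using g(1) by (auto simp: is_path_def is_walk_def)
  next
    case False
    then have "t = Suc (m - 1)" "m - 1 < m" using that \<open>0 < m\<close> by auto
    then show ?thesis using g(1) unfolding is_path_def is_walk_def by metis
  qed
  have "is_path ET g m" using g(1) by (auto simp: is_path_def is_walk_def)
  then have "is_path ET (\<lambda>t. if t = 0 then a else g (t - 1)) (Suc m)"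
    using ac g_a g(2) by (intro is_path_Cons) auto
  moreover have "ET (g m) a" using ad g(3) sym by simp
  ultimately show False
    using path_not_closed[of _ "Suc m"] \<open>0 < m\<close> by fastforce
qed

lemma path_tail_avoiding_start:
  assumes "is_path ET f (Suc n)"
  shows "(f 1, f (Suc n)) \<in> (edges_avoiding ET (f 0))\<^sup>*"
proof -
  have "is_walk ET (\<lambda>t. f (Suc t)) n" using assms by (simp add: is_path_def is_walk_def)
  moreover have "f (Suc t) \<noteq> f 0" if "t \<le> n" for t
    using is_path_inj[OF assms, of "Suc t" 0] that by auto
  ultimately have "((\<lambda>t. f (Suc t)) 0, (\<lambda>t. f (Suc t)) n) \<in> (edges_avoiding ET (f 0))\<^sup>*"
    by (intro walk_avoiding) auto
  then show ?thesis by simp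
qed

lemma paths_same_second_vertex:
  assumes f: "is_path ET f (Suc n)" and g: "is_path ET g (Suc m)"
    and "f 0 = g 0" "f (Suc n) = g (Suc m)"
  shows "f 1 = g 1"
proof (rule ccontr)
  assume "f 1 \<noteq> g 1"
  have "ET (f 0) (f 1)" "ET (f 0) (g 1)"
    using f g assms(3) by (auto simp: is_path_def is_walk_def)
  moreover have "(g (Suc m), g 1) \<in> (edges_avoiding ET (f 0))\<^sup>*"
    using rtrancl_edges_avoiding_sym[OF symp path_tail_avoiding_start[OF g]] assms(3) by simp
  with path_tail_avoiding_start[OF f] assms(4)
  have "(f 1, g 1) \<in> (edges_avoiding ET (f 0))\<^sup>*" by (simp add: rtrancl_trans)
  ultimately show False using nbrs_separated \<open>f 1 \<noteq> g 1\<close> by blast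
qed

lemma path_unique:
  assumes "is_path ET f n" "is_path ET g m" "f 0 = g 0" "f n = g m"
  shows "n = m \<and> (\<forall>i\<le>n. f i = g i)"
  using assms
proof (induction n arbitrary: f g m)
  case 0
  then show ?case using is_path_inj[OF "0.prems"(2), of m 0] by simp
next
  case (Suc n)
  obtain m' where m: "m = Suc m'"
    using Suc.prems is_path_inj[OF Suc.prems(1), of "Suc n" 0] by (cases m) auto
  have tails: "is_path ET (\<lambda>t. f (1 + t)) n" "is_path ET (\<lambda>t. g (1 + t)) m'"
    using is_path_shift[OF Suc.prems(1), of 1 "Suc n"] is_path_shift[OF Suc.prems(2), of 1 m] m
    by auto
  have "f 1 = g 1" using paths_same_second_vertex Suc.prems m by blast
  then have IH: "n = m' \<and> (\<forall>i\<le>n. f (1 + i) = g (1 + i))"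
    using Suc.IH[OF tails] Suc.prems(4) m by simp
  have "f i = g i" if "i \<le> Suc n" for i
    using that IH Suc.prems(3) by (cases i) auto
  then show ?case using IH m by simp
qed

lemma nonbacktracking_walk_is_path:
  assumes "is_walk ET f n" and "\<And>i. i + 2 \<le> n \<Longrightarrow> f (i + 2) \<noteq> f i"
  shows "is_path ET f n"
  using assms
proof (induction n)
  case 0
  then show ?case by (simp add: is_path_def)
next
  case (Suc n)
  have p: "is_path ET f n"
    using Suc.prems by (intro Suc.IH) (auto simp: is_walk_def)
  have e: "ET (f n) (f (Suc n))" using Suc.prems(1) by (simp add: is_walk_def)
  have "f (Suc n) \<notin> f ` {..n}"
  proof
    assume "f (Suc n) \<in> f ` {..n}"
    then obtain i where i: "i \<le> n" "f i = f (Suc n)" by auto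
    consider "i = n" | "Suc i = n" | "i + 2 \<le> n" using i(1) by linarith
    then show False
    proof cases
      case 1
      then show False using e i irrefl by simp
    next
      case 2
      then show False using Suc.prems(2)[of i] i by simp
    next
      case 3
      have "is_path ET (\<lambda>t. f (i + t)) (n - i)" using is_path_shift[OF p] i by simp
      then show False
        by (rule path_not_closed) (use e i 3 in auto)
    qed
  qed
  then show ?case
    using p Suc.prems(1) by (simp add: is_path_def atMost_Suc)
qed

lemma common_nbr_on_path:
  assumes p: "is_path ET f n" and ik: "i < k" "k \<le> n" and z: "ET z (f i)" "ET z (f k)"
  shows "z \<in> f ` {..n}"
proof (rule ccontr)
  assume "z \<notin> f ` {..n}"
  then have "(f i, f k) \<in> (edges_avoiding ET z)\<^sup>*"
    using p ik by (intro walk_avoiding[of ET f n]) (auto simp: is_path_def)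
  then have "f i = f k" using nbrs_separated z by blast
  then show False using is_path_inj[OF p, of i k] ik by simp
qed

lemma path_far_no_common_nbr:
  assumes p: "is_path ET f n" and ab: "a + 3 \<le> b" "b \<le> n" and z: "ET (f a) z" "ET z (f b)"
  shows False
proof -
  obtain t where t: "t \<le> n" "z = f t"
    using common_nbr_on_path[OF p, of a b z] sym[OF z(1)] z(2) ab by auto
  then have "t = Suc a \<or> a = Suc t" "b = Suc t \<or> t = Suc b"
    using path_no_chord[OF p, of a t] path_no_chord[OF p, of t b] z ab by auto
  then show False using ab by linarith
qed

end

section \<open>A criterion for non-positive Lin-Lu-Yau curvature\<close>

lemma simple_graph_nbrs_subset: "simple_graph V E \<Longrightarrow> nbrs E u \<subseteq> V"
  by (auto simp: simple_graph_def nbrs_def)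

lemma simple_graph_finite_nbrs: "simple_graph V E \<Longrightarrow> finite (nbrs E u)"
  by (meson finite_subset simple_graph_def simple_graph_nbrs_subset)

lemma lazy_measure_nonneg: "0 \<le> \<alpha> \<Longrightarrow> \<alpha> \<le> 1 \<Longrightarrow> 0 \<le> lazy_measure E \<alpha> u w"
  by (auto simp: lazy_measure_def)

lemma sum_lazy_measure_weighted:
  assumes G: "simple_graph V E" and u: "u \<in> V"
  shows "(\<Sum>w\<in>V. g w * lazy_measure E \<alpha> u w)
           = \<alpha> * g u + (1 - \<alpha>) / real (deg E u) * (\<Sum>w\<in>nbrs E u. g w)"
proof -
  have fin: "finite V" and irr: "\<not> E u u" using G by (auto simp: simple_graph_def)
  have "(\<Sum>w\<in>V. g w * lazy_measure E \<alpha> u w) = (\<Sum>w\<in>V. if w = u then \<alpha> * g u else 0)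
      + (\<Sum>w\<in>V. if w \<in> nbrs E u then (1 - \<alpha>) / real (deg E u) * g w else 0)"
    unfolding sum.distrib[symmetric] using irr
    by (intro sum.cong) (auto simp: lazy_measure_def nbrs_def)
  also have "\<dots> = \<alpha> * g u + (\<Sum>w\<in>nbrs E u. (1 - \<alpha>) / real (deg E u) * g w)"
    using fin u simple_graph_nbrs_subset[OF G, of u]
    by (simp add: sum.inter_restrict[symmetric] Int_absorb1)
  finally show ?thesis by (simp add: sum_distrib_left)
qed

lemma sum_lazy_measure:
  assumes "simple_graph V E" "u \<in> V" "0 < deg E u"
  shows "(\<Sum>w\<in>V. lazy_measure E \<alpha> u w) = 1"
proof -
  have "(\<Sum>w\<in>V. 1 * lazy_measure E \<alpha> u w) = \<alpha> * 1 + (1 - \<alpha>) / real (deg E u) * real (deg E u)"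
    unfolding sum_lazy_measure_weighted[OF assms(1,2)] by (simp add: deg_def)
  then show ?thesis using assms(3) by simp
qed

lemma Lim_at_left_le_if_mono:
  fixes f :: "real \<Rightarrow> real"
  assumes "a < b"
    and mono: "\<And>x y. a \<le> x \<Longrightarrow> x \<le> y \<Longrightarrow> y < b \<Longrightarrow> f x \<le> f y"
    and bound: "\<And>x. a \<le> x \<Longrightarrow> x < b \<Longrightarrow> f x \<le> c"
  shows "Lim (at_left b) f \<le> c"
proof -
  have "at b within ({..<b} \<inter> {a..}) = at_left b"
    by (rule at_within_nhd[where S = "{a<..}"]) (use \<open>a < b\<close> in \<open>auto simp: at_within_Iic_at_left\<close>)
  moreover have "(f \<longlongrightarrow> Sup (f ` ({..<b} \<inter> {a..}))) (at b within ({..<b} \<inter> {a..}))"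
    by (rule Lim_left_bound[where K = c]) (use mono bound in auto)
  ultimately have "Lim (at_left b) f = Sup (f ` ({..<b} \<inter> {a..}))"
    by (intro tendsto_Lim) (auto simp: trivial_limit_at_left_real)
  also have "\<dots> \<le> c"
    using \<open>a < b\<close> bound by (intro cSup_least) (auto simp: not_le)
  finally show ?thesis .
qed

lemma lazy_measure_mix:
  "t * lazy_measure E \<alpha> z w + (1 - t) * (if w = z then 1 else 0)
     = lazy_measure E (1 - t * (1 - \<alpha>)) z w"
  by (auto simp: lazy_measure_def algebra_simps)

locale lly_edge =
  fixes V :: "'a set" and E :: "'a \<Rightarrow> 'a \<Rightarrow> bool" and u v :: 'a
  assumes graph: "simple_graph V E" and edge: "E u v"
begin

lemma finite_V: "finite V" and u_in_V: "u \<in> V" and v_in_V: "v \<in> V" and irrefl: "\<not> E a a"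
  using graph edge by (auto simp: simple_graph_def)

lemma deg_u_pos: "0 < deg E u" and deg_v_pos: "0 < deg E v"
proof -
  have "v \<in> nbrs E u" "u \<in> nbrs E v"
    using edge graph by (auto simp: nbrs_def simple_graph_def)
  then show "0 < deg E u" "0 < deg E v"
    unfolding deg_def using simple_graph_finite_nbrs[OF graph] card_gt_0_iff by blast+
qed

abbreviation "mu \<alpha> \<equiv> lazy_measure E \<alpha> u"
abbreviation "mv \<alpha> \<equiv> lazy_measure E \<alpha> v"

definition transport_cost :: "('a \<Rightarrow> 'a \<Rightarrow> real) \<Rightarrow> real" where
  "transport_cost \<pi> = (\<Sum>a\<in>V. \<Sum>b\<in>V. \<pi> a b * real (gdist E a b))"

definition transport_costs :: "real \<Rightarrow> real set" where
  "transport_costs \<alpha> = {transport_cost \<pi> | \<pi>. is_coupling V (mu \<alpha>) (mv \<alpha>) \<pi>}"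

lemma wasserstein_eq_Inf: "wasserstein V E (mu \<alpha>) (mv \<alpha>) = Inf (transport_costs \<alpha>)"
  unfolding wasserstein_def transport_costs_def transport_cost_def ..

lemma product_is_coupling:
  assumes "0 \<le> \<alpha>" "\<alpha> \<le> 1"
  shows "is_coupling V (mu \<alpha>) (mv \<alpha>) (\<lambda>a b. if a \<in> V \<and> b \<in> V then mu \<alpha> a * mv \<alpha> b else 0)"
proof -
  have "(\<Sum>w\<in>V. mu \<alpha> w) = 1" "(\<Sum>w\<in>V. mv \<alpha> w) = 1"
    using sum_lazy_measure[OF graph] u_in_V v_in_V deg_u_pos deg_v_pos by auto
  then show ?thesis
    by (auto simp: is_coupling_def sum_distrib_left[symmetric] sum_distrib_right[symmetric]
        intro: sum.cong intro!: mult_nonneg_nonneg lazy_measure_nonneg[OF assms])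
qed

lemma transport_costs_nonempty: "0 \<le> \<alpha> \<Longrightarrow> \<alpha> \<le> 1 \<Longrightarrow> transport_costs \<alpha> \<noteq> {}"
  using product_is_coupling unfolding transport_costs_def by blast

lemma bdd_below_transport_costs: "bdd_below (transport_costs \<alpha>)"
  by (rule bdd_belowI[where m = 0])
    (auto simp: transport_costs_def transport_cost_def is_coupling_def intro!: sum_nonneg)

lemma coupling_vanishes_outside:
  assumes c: "is_coupling V (mu \<alpha>) (mv \<alpha>) \<pi>" and S: "{u, v} \<union> nbrs E u \<union> nbrs E v \<subseteq> S"
    and nz: "\<pi> a b \<noteq> 0"
  shows "a \<in> S \<and> b \<in> S"
proof -
  have ab: "a \<in> V" "b \<in> V" and nonneg: "\<And>a b. 0 \<le> \<pi> a b"
    using c nz unfolding is_coupling_def by blast+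
  have "(\<Sum>b'\<in>V. \<pi> a b') \<noteq> 0" "(\<Sum>a'\<in>V. \<pi> a' b) \<noteq> 0"
    using nz ab by (auto simp: sum_nonneg_eq_0_iff[OF finite_V] nonneg)
  then have "mu \<alpha> a \<noteq> 0" "mv \<alpha> b \<noteq> 0"
    using c ab unfolding is_coupling_def by auto
  then show ?thesis using S by (auto simp: lazy_measure_def nbrs_def split: if_splits)
qed

lemma potential_gap_le_transport_cost:
  assumes c: "is_coupling V (mu \<alpha>) (mv \<alpha>) \<pi>" and S: "{u, v} \<union> nbrs E u \<union> nbrs E v \<subseteq> S"
    and lip: "\<And>a b. a \<in> S \<Longrightarrow> b \<in> S \<Longrightarrow> g a - g b \<le> real (gdist E a b)"
  shows "(\<Sum>a\<in>V. g a * mu \<alpha> a) - (\<Sum>b\<in>V. g b * mv \<alpha> b) \<le> transport_cost \<pi>"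
proof -
  have m1: "\<And>a. a \<in> V \<Longrightarrow> mu \<alpha> a = (\<Sum>b\<in>V. \<pi> a b)"
    and m2: "\<And>b. b \<in> V \<Longrightarrow> mv \<alpha> b = (\<Sum>a\<in>V. \<pi> a b)"
    using c by (auto simp: is_coupling_def)
  have "(\<Sum>a\<in>V. g a * mu \<alpha> a) - (\<Sum>b\<in>V. g b * mv \<alpha> b)
      = (\<Sum>a\<in>V. \<Sum>b\<in>V. \<pi> a b * g a) - (\<Sum>b\<in>V. \<Sum>a\<in>V. \<pi> a b * g b)"
    by (simp add: m1 m2 sum_distrib_left sum_distrib_right mult.commute cong: sum.cong)
  also have "\<dots> = (\<Sum>a\<in>V. \<Sum>b\<in>V. \<pi> a b * (g a - g b))"
    by (subst sum.swap[of _ V V]) (simp add: right_diff_distrib sum_subtractf)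
  also have "\<dots> \<le> transport_cost \<pi>"
    unfolding transport_cost_def
  proof (intro sum_mono)
    fix a b
    show "\<pi> a b * (g a - g b) \<le> \<pi> a b * real (gdist E a b)"
    proof (cases "\<pi> a b = 0")
      case False
      then show ?thesis
        using coupling_vanishes_outside[OF c S] lip c
        by (intro mult_left_mono) (auto simp: is_coupling_def)
    qed simp
  qed
  finally show ?thesis .
qed

text \<open>The easy half of Kantorovich duality.\<close>

lemma one_le_wasserstein:
  assumes "0 \<le> \<alpha>" "\<alpha> \<le> 1"
    and S: "{u, v} \<union> nbrs E u \<union> nbrs E v \<subseteq> S"
    and lip: "\<And>a b. a \<in> S \<Longrightarrow> b \<in> S \<Longrightarrow> g a - g b \<le> real (gdist E a b)"
    and gap: "1 \<le> g u - g v"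
    and avg_gap: "1 \<le> (\<Sum>w\<in>nbrs E u. g w) / real (deg E u) - (\<Sum>w\<in>nbrs E v. g w) / real (deg E v)"
  shows "1 \<le> wasserstein V E (mu \<alpha>) (mv \<alpha>)"
proof -
  have "1 = \<alpha> * 1 + (1 - \<alpha>) * 1" by simp
  also have "\<dots> \<le> \<alpha> * (g u - g v)
      + (1 - \<alpha>) * ((\<Sum>w\<in>nbrs E u. g w) / real (deg E u) - (\<Sum>w\<in>nbrs E v. g w) / real (deg E v))"
    using assms(1,2) gap avg_gap by (intro add_mono mult_left_mono) auto
  also have "\<dots> = (\<Sum>a\<in>V. g a * mu \<alpha> a) - (\<Sum>b\<in>V. g b * mv \<alpha> b)"
    by (simp add: sum_lazy_measure_weighted[OF graph] u_in_V v_in_V algebra_simps)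
  finally have gap_V: "1 \<le> (\<Sum>a\<in>V. g a * mu \<alpha> a) - (\<Sum>b\<in>V. g b * mv \<alpha> b)" .
  show ?thesis
    unfolding wasserstein_eq_Inf
  proof (intro cInf_greatest[OF transport_costs_nonempty[OF assms(1,2)]])
    fix c assume "c \<in> transport_costs \<alpha>"
    then obtain \<pi> where "is_coupling V (mu \<alpha>) (mv \<alpha>) \<pi>" "c = transport_cost \<pi>"
      unfolding transport_costs_def by blast
    with potential_gap_le_transport_cost[OF _ S lip] gap_V show "1 \<le> c" by fastforce
  qed
qed

lemma mixed_coupling:
  assumes c: "is_coupling V (mu \<alpha>) (mv \<alpha>) \<pi>" and t: "0 \<le> t" "t \<le> 1"
  defines "\<beta> \<equiv> 1 - t * (1 - \<alpha>)"
  shows "is_coupling V (mu \<beta>) (mv \<beta>)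
           (\<lambda>a b. t * \<pi> a b + (1 - t) * (if a = u \<and> b = v then 1 else 0))"
  unfolding is_coupling_def
proof (intro conjI allI ballI impI)
  fix a b
  show "0 \<le> t * \<pi> a b + (1 - t) * (if a = u \<and> b = v then 1 else 0)"
    using c t by (simp add: is_coupling_def)
  assume "t * \<pi> a b + (1 - t) * (if a = u \<and> b = v then 1 else 0) \<noteq> 0"
  then show "a \<in> V" "b \<in> V"
    using c u_in_V v_in_V by (auto simp: is_coupling_def split: if_splits)
next
  fix a assume a: "a \<in> V"
  have "(\<Sum>b\<in>V. if a = u \<and> b = v then 1 else 0) = (if a = u then 1 else (0::real))"
    using finite_V v_in_V by auto
  moreover have "(\<Sum>b\<in>V. \<pi> a b) = mu \<alpha> a" using c a by (simp add: is_coupling_def)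
  ultimately show "(\<Sum>b\<in>V. t * \<pi> a b + (1 - t) * (if a = u \<and> b = v then 1 else 0)) = mu \<beta> a"
    unfolding \<beta>_def lazy_measure_mix[symmetric]
    by (simp add: sum.distrib sum_distrib_left[symmetric])
next
  fix b assume b: "b \<in> V"
  have "(\<Sum>a\<in>V. if a = u \<and> b = v then 1 else 0) = (if b = v then 1 else (0::real))"
    using finite_V u_in_V by auto
  moreover have "(\<Sum>a\<in>V. \<pi> a b) = mv \<alpha> b" using c b by (simp add: is_coupling_def)
  ultimately show "(\<Sum>a\<in>V. t * \<pi> a b + (1 - t) * (if a = u \<and> b = v then 1 else 0)) = mv \<beta> b"
    unfolding \<beta>_def lazy_measure_mix[symmetric]
    by (simp add: sum.distrib sum_distrib_left[symmetric])
qed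

lemma transport_cost_linear:
  "transport_cost (\<lambda>a b. s * \<pi> a b + r * \<pi>' a b) = s * transport_cost \<pi> + r * transport_cost \<pi>'"
  by (simp add: transport_cost_def sum.distrib sum_distrib_left algebra_simps)

lemma transport_cost_point_mass:
  "transport_cost (\<lambda>a b. if a = u \<and> b = v then 1 else 0) = real (gdist E u v)"
proof -
  have "transport_cost (\<lambda>a b. if a = u \<and> b = v then 1 else 0)
      = (\<Sum>a\<in>V. if a = u then (\<Sum>b\<in>V. if b = v then real (gdist E u v) else 0) else 0)"
    unfolding transport_cost_def by (intro sum.cong) (auto intro: sum.cong)
  then show ?thesis using finite_V u_in_V v_in_V by simp
qed

lemma wasserstein_mix_le:
  assumes \<alpha>: "0 \<le> \<alpha>" "\<alpha> \<le> 1" and t: "0 < t" "t \<le> 1"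
  defines "\<beta> \<equiv> 1 - t * (1 - \<alpha>)"
  shows "wasserstein V E (mu \<beta>) (mv \<beta>) \<le> t * wasserstein V E (mu \<alpha>) (mv \<alpha>) + (1 - t)"
proof -
  have "(Inf (transport_costs \<beta>) - (1 - t)) / t \<le> Inf (transport_costs \<alpha>)"
  proof (rule cInf_greatest[OF transport_costs_nonempty[OF \<alpha>]])
    fix c assume "c \<in> transport_costs \<alpha>"
    then obtain \<pi> where \<pi>: "is_coupling V (mu \<alpha>) (mv \<alpha>) \<pi>" and c: "c = transport_cost \<pi>"
      unfolding transport_costs_def by blast
    let ?\<pi>' = "\<lambda>a b. t * \<pi> a b + (1 - t) * (if a = u \<and> b = v then 1 else 0)"
    have "is_coupling V (mu \<beta>) (mv \<beta>) ?\<pi>'"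
      using mixed_coupling[OF \<pi>] t unfolding \<beta>_def by simp
    then have "transport_cost ?\<pi>' \<in> transport_costs \<beta>"
      unfolding transport_costs_def by blast
    then have "Inf (transport_costs \<beta>) \<le> transport_cost ?\<pi>'"
      by (rule cInf_lower[OF _ bdd_below_transport_costs])
    also have "\<dots> = t * c + (1 - t) * real (gdist E u v)"
      unfolding transport_cost_linear transport_cost_point_mass c ..
    also have "\<dots> \<le> t * c + (1 - t)"
      using gdist_le_1[of E, OF edge] t by (simp add: mult_left_le)
    finally show "(Inf (transport_costs \<beta>) - (1 - t)) / t \<le> c"
      using t by (simp add: divide_le_eq mult.commute)
  qed
  then show ?thesis
    using t unfolding wasserstein_eq_Inf by (simp add: divide_le_eq algebra_simps)
qed

lemma kappa_alpha_ratio_mono: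
  assumes "0 \<le> \<alpha>" "\<alpha> \<le> \<beta>" "\<beta> < 1"
  shows "kappa_alpha V E \<alpha> u v / (1 - \<alpha>) \<le> kappa_alpha V E \<beta> u v / (1 - \<beta>)"
proof -
  define t where "t = (1 - \<beta>) / (1 - \<alpha>)"
  have t: "0 < t" "t \<le> 1" and \<beta>: "\<beta> = 1 - t * (1 - \<alpha>)"
    using assms by (auto simp: t_def field_simps)
  have "t * kappa_alpha V E \<alpha> u v \<le> kappa_alpha V E \<beta> u v"
    using wasserstein_mix_le[of \<alpha> t] assms t unfolding kappa_alpha_def \<beta>
    by (simp add: algebra_simps)
  then show ?thesis
    using assms by (simp add: t_def field_simps)
qed

text \<open>\<open>Lim\<close> is unspecified unless the limit exists; monotonicity of \<open>\<kappa>\<^sub>\<alpha>/(1 - \<alpha>)\<close>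
  guarantees that it does.\<close>

theorem kappa_LLY_nonpos_if_potential:
  assumes S: "{u, v} \<union> nbrs E u \<union> nbrs E v \<subseteq> S"
    and lip: "\<And>a b. a \<in> S \<Longrightarrow> b \<in> S \<Longrightarrow> g a - g b \<le> real (gdist E a b)"
    and gap: "1 \<le> g u - g v"
    and avg_gap: "1 \<le> (\<Sum>w\<in>nbrs E u. g w) / real (deg E u) - (\<Sum>w\<in>nbrs E v. g w) / real (deg E v)"
  shows "kappa_LLY V E u v \<le> 0"
  unfolding kappa_LLY_def
proof (rule Lim_at_left_le_if_mono[of 0])
  fix \<alpha> :: real assume "0 \<le> \<alpha>" "\<alpha> < 1"
  then show "kappa_alpha V E \<alpha> u v / (1 - \<alpha>) \<le> 0"
    using one_le_wasserstein[OF _ _ S lip gap avg_gap]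
    by (simp add: kappa_alpha_def divide_nonpos_pos)
qed (use kappa_alpha_ratio_mono in auto)

lemma kappa_LLY_nonpos_degree_three_edge:
  assumes conn: "graph_connected V E"
    and in_V: "a \<in> V" "b \<in> V" "s \<in> V" "r \<in> V"
    and dist: "distinct [u, v, a, b, s, r]"
    and Nu: "nbrs E u = {a, v, s}" and Nv: "nbrs E v = {b, r, u}"
    and far: "2 \<le> gdist E a v" "2 \<le> gdist E a r" "3 \<le> gdist E a b"
      "2 \<le> gdist E u b" "2 \<le> gdist E s b"
  shows "kappa_LLY V E u v \<le> 0"
proof -
  define g :: "'a \<Rightarrow> real" where
    "g w = (if w = a then 2 else if w = u \<or> w = s then 1 else if w = b then -1 else 0)" for w
  let ?S = "{u, v, a, b, s, r}"
  have g: "g u = 1" "g v = 0" "g a = 2" "g b = -1" "g s = 1" "g r = 0"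
    using dist by (auto simp: g_def)
  have lip: "g x - g y \<le> real (gdist E x y)" if "x \<in> ?S" "y \<in> ?S" for x y
  proof (cases "x = y")
    case False
    then have "1 \<le> gdist E x y"
      using connected_gdist_ge_1[OF conn] that in_V u_in_V v_in_V by auto
    then show ?thesis using that g far by auto
  qed simp
  have "deg E u = 3" "deg E v = 3"
    using Nu Nv dist by (auto simp: deg_def card_insert_if)
  moreover have "(\<Sum>w\<in>nbrs E u. g w) = 3" "(\<Sum>w\<in>nbrs E v. g w) = 0"
    using Nu Nv dist g by (auto simp: sum.insert_if)
  ultimately show ?thesis
    using Nu Nv g by (intro kappa_LLY_nonpos_if_potential[where S = ?S, OF _ lip]) auto
qed

text \<open>With this potential \<open>g u - g v = 1\<close>, and the averages of \<open>g\<close> over \<open>nbrs E u\<close> and over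
  \<open>nbrs E v = {u, v'}\<close> are 1 and 0.\<close>

definition degree_two_potential :: "'a \<Rightarrow> 'a \<Rightarrow> 'a \<Rightarrow> real" where
  "degree_two_potential v' u' w =
    (if w = v then 0 else if w = v' then -1 else if w = u' then 2 else 1)"

lemma degree_two_potential_lipschitz:
  fixes v' u' :: 'a
  defines "g \<equiv> degree_two_potential v' u'"
  assumes conn: "graph_connected V E" and "v' \<in> V" "v \<noteq> v'"
    and S: "x \<in> {u, v, v'} \<union> nbrs E u" "y \<in> {u, v, v'} \<union> nbrs E u"
    and far: "2 \<le> gdist E u v'" "3 \<le> gdist E u' v'" "2 \<le> gdist E u' v"
      "\<And>w. w \<in> nbrs E u \<Longrightarrow> w \<noteq> v \<Longrightarrow> 2 \<le> gdist E w v'"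
  shows "g x - g y \<le> real (gdist E x y)"
proof (cases "x = y")
  case False
  then have one: "1 \<le> gdist E x y"
    using connected_gdist_ge_1[OF conn] S \<open>v' \<in> V\<close> u_in_V v_in_V simple_graph_nbrs_subset[OF graph]
    by blast
  have g: "g v = 0" "g v' = -1" "g u' \<le> 2" "x \<noteq> u' \<Longrightarrow> g x \<le> 1" "g x \<le> 2"
    "y \<noteq> v \<Longrightarrow> y \<noteq> v' \<Longrightarrow> 1 \<le> g y"
    using \<open>v \<noteq> v'\<close> by (auto simp: g_def degree_two_potential_def)
  show ?thesis
  proof (cases "y = v'")
    case True
    then consider "x = u'" | "x = v" | "x \<noteq> u'" "2 \<le> gdist E x y"
      using S far False by auto
    then show ?thesis using True g one far by cases auto
  next
    case False
    then show ?thesis using g one far by (cases "y = v"; cases "x = u'") auto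
  qed
qed simp

lemma kappa_LLY_nonpos_degree_two_endpoint:
  assumes conn: "graph_connected V E"
    and Nv: "nbrs E v = {u, v'}" and u_far: "2 \<le> gdist E u v'"
    and u': "u' \<in> nbrs E u" "u' \<noteq> v" "3 \<le> gdist E u' v'"
    and far: "\<And>w. w \<in> nbrs E u \<Longrightarrow> w \<noteq> v \<Longrightarrow> 2 \<le> gdist E w v'"
  shows "kappa_LLY V E u v \<le> 0"
proof -
  let ?g = "degree_two_potential v' u'" and ?S = "{u, v, v'} \<union> nbrs E u"
  have "v' \<in> V" "u' \<in> V" using Nv u' graph by (auto simp: nbrs_def simple_graph_def)
  have "u \<noteq> v'" "v \<noteq> v'" using u_far Nv irrefl by (auto simp: nbrs_def)
  have "v' \<notin> nbrs E u" using u_far gdist_le_1[of E u v'] by (auto simp: nbrs_def)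
  then have g: "?g u = 1" "?g v = 0" "?g v' = -1" "?g u' = 2"
    using \<open>u \<noteq> v'\<close> \<open>v \<noteq> v'\<close> u' edge irrefl by (auto simp: degree_two_potential_def nbrs_def)
  have "u' \<notin> nbrs E v" using Nv u' \<open>v' \<notin> nbrs E u\<close> irrefl by (auto simp: nbrs_def)
  then have "2 \<le> gdist E u' v"
    using conn \<open>u' \<in> V\<close> v_in_V u' graph
    by (intro gdist_ge_2) (auto simp: graph_connected_def nbrs_def simple_graph_def)
  then have lip: "?g x - ?g y \<le> real (gdist E x y)" if "x \<in> ?S" "y \<in> ?S" for x y
    using degree_two_potential_lipschitz[OF conn \<open>v' \<in> V\<close> \<open>v \<noteq> v'\<close> that u_far u'(3)] far
    by blast
  have "(\<Sum>w\<in>nbrs E u. ?g w)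
      = (\<Sum>w\<in>nbrs E u. 1 + (if w = u' then 1 else 0) - (if w = v then 1 else 0))"
    using \<open>v' \<notin> nbrs E u\<close> u'(2) by (intro sum.cong) (auto simp: degree_two_potential_def)
  also have "\<dots> = real (deg E u)"
    using simple_graph_finite_nbrs[OF graph] edge u'(1)
    by (simp add: sum.distrib sum_subtractf deg_def nbrs_def)
  finally have "(\<Sum>w\<in>nbrs E u. ?g w) = real (deg E u)" .
  moreover have "deg E v = 2" "(\<Sum>w\<in>nbrs E v. ?g w) = 0"
    using Nv \<open>u \<noteq> v'\<close> g by (simp_all add: deg_def)
  ultimately show ?thesis
    using Nv g deg_u_pos by (intro kappa_LLY_nonpos_if_potential[where S = ?S, OF _ lip]) auto
qed

end

section \<open>The boundary walk of an embedded tree\<close>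

locale embedded_tree = tree_graph +
  fixes rot :: "'a \<Rightarrow> 'a \<Rightarrow> 'a"
  assumes rotation: "rotation_system V ET rot"
begin

definition leaf_nbr :: "'a \<Rightarrow> 'a" where
  "leaf_nbr l = (THE u. ET l u)"

definition boundary_walk :: "'a \<Rightarrow> nat \<Rightarrow> 'a" where
  "boundary_walk l i = fst ((face_step rot ^^ i) (l, leaf_nbr l))"

definition boundary_len :: "'a \<Rightarrow> nat" where
  "boundary_len l = (LEAST n. 1 \<le> n \<and> is_leaf ET (boundary_walk l n))"

lemma next_leaf_eq: "next_leaf ET rot l = boundary_walk l (boundary_len l)"
  unfolding next_leaf_def Let_def boundary_walk_def boundary_len_def leaf_nbr_def ..

lemma rot_bij: "v \<in> V \<Longrightarrow> bij_betw (rot v) (nbrs ET v) (nbrs ET v)"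
  using rotation by (simp add: rotation_system_def)

lemma rot_orbit: "v \<in> V \<Longrightarrow> a \<in> nbrs ET v \<Longrightarrow> w \<in> nbrs ET v \<Longrightarrow> \<exists>n. (rot v ^^ n) a = w"
  using rotation by (simp add: rotation_system_def)

lemma rot_edge: "ET v a \<Longrightarrow> ET v (rot v a)"
  using rot_bij[of v] edge_in_V[of v a] bij_betw_apply by (fastforce simp: nbrs_def)

lemma rot_inj: "ET v a \<Longrightarrow> ET v b \<Longrightarrow> rot v a = rot v b \<Longrightarrow> a = b"
  using rot_bij[of v] edge_in_V[of v a] by (auto simp: nbrs_def bij_betw_def inj_on_def)

lemma rot_swap_imp_nbrs:
  assumes va: "ET v a" and vb: "ET v b" and ab: "rot v a = b" and ba: "rot v b = a"
  shows "nbrs ET v = {a, b}"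
proof
  have "(rot v ^^ n) a \<in> {a, b}" for n
    by (induction n) (use ab ba in auto)
  then show "nbrs ET v \<subseteq> {a, b}"
    using rot_orbit[of v a] edge_in_V[OF va] va by (auto simp: nbrs_def)
  show "{a, b} \<subseteq> nbrs ET v" using va vb by (auto simp: nbrs_def)
qed

lemma rot_fixed_imp_leaf: "ET v a \<Longrightarrow> rot v a = a \<Longrightarrow> is_leaf ET v"
  using rot_swap_imp_nbrs[of v a a] by (simp add: is_leaf_def deg_def)

lemma leaf_nbrs: "is_leaf ET l \<Longrightarrow> nbrs ET l = {leaf_nbr l}"
proof -
  assume "is_leaf ET l"
  then obtain u where u: "nbrs ET l = {u}"
    by (auto simp: is_leaf_def deg_def card_Suc_eq)
  then have "leaf_nbr l = u"
    unfolding leaf_nbr_def by (intro the_equality) (auto simp: nbrs_def)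
  then show ?thesis using u by simp
qed

lemma leaf_nbr_edge: "is_leaf ET l \<Longrightarrow> ET l (leaf_nbr l)"
  using leaf_nbrs by (auto simp: nbrs_def)

lemma leaf_edge_imp_nbr: "is_leaf ET l \<Longrightarrow> ET l w \<Longrightarrow> w = leaf_nbr l"
  using leaf_nbrs by (auto simp: nbrs_def)

lemma leaf_in_V: "is_leaf ET l \<Longrightarrow> l \<in> V"
  using leaf_nbr_edge edge_in_V by blast

lemma boundary_walk_0: "boundary_walk l 0 = l"
  by (simp add: boundary_walk_def)

lemma boundary_walk_1: "boundary_walk l (Suc 0) = leaf_nbr l"
  by (simp add: boundary_walk_def face_step_def)

lemma snd_face_step_pow: "snd ((face_step rot ^^ i) (l, leaf_nbr l)) = boundary_walk l (Suc i)"
  by (simp add: boundary_walk_def face_step_def)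

lemma boundary_walk_Suc_Suc:
  "boundary_walk l (Suc (Suc i)) = rot (boundary_walk l (Suc i)) (boundary_walk l i)"
  by (simp add: boundary_walk_def face_step_def snd_face_step_pow[symmetric])

lemma boundary_walk_edge:
  assumes "is_leaf ET l"
  shows "ET (boundary_walk l i) (boundary_walk l (Suc i))"
proof (induction i rule: nat_less_induct)
  case (1 i)
  show ?case
  proof (cases i)
    case 0
    then show ?thesis using leaf_nbr_edge[OF assms] by (simp add: boundary_walk_0 boundary_walk_1)
  next
    case (Suc k)
    then show ?thesis
      using 1 rot_edge sym by (simp add: boundary_walk_Suc_Suc)
  qed
qed

lemma boundary_walk_in_V: "is_leaf ET l \<Longrightarrow> boundary_walk l i \<in> V"
  using boundary_walk_edge edge_in_V by blast

lemma boundary_walk_no_backtrack: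
  assumes l: "is_leaf ET l" and nl: "\<not> is_leaf ET (boundary_walk l (Suc i))"
  shows "boundary_walk l (Suc (Suc i)) \<noteq> boundary_walk l i"
  using rot_fixed_imp_leaf[of "boundary_walk l (Suc i)" "boundary_walk l i"]
    boundary_walk_edge[OF l, of i] sym nl by (auto simp: boundary_walk_Suc_Suc)

lemma boundary_walk_reaches_leaf:
  assumes l: "is_leaf ET l"
  shows "\<exists>n. 1 \<le> n \<and> is_leaf ET (boundary_walk l n)"
proof (rule ccontr)
  assume "\<not> ?thesis"
  then have "is_path ET (boundary_walk l) (card V)"
    using boundary_walk_edge[OF l] boundary_walk_no_backtrack[OF l]
    by (intro nonbacktracking_walk_is_path) (auto simp: is_walk_def numeral_2_eq_2)
  then have "card (boundary_walk l ` {..card V}) = Suc (card V)"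
    by (simp add: is_path_def card_image)
  moreover have "card (boundary_walk l ` {..card V}) \<le> card V"
    using boundary_walk_in_V[OF l] by (intro card_mono[OF finite_V]) auto
  ultimately show False by simp
qed

lemma boundary_len_ge_1: "is_leaf ET l \<Longrightarrow> 1 \<le> boundary_len l"
  using LeastI_ex[OF boundary_walk_reaches_leaf] by (simp add: boundary_len_def)

lemma boundary_walk_len_leaf: "is_leaf ET l \<Longrightarrow> is_leaf ET (boundary_walk l (boundary_len l))"
  using LeastI_ex[OF boundary_walk_reaches_leaf] by (simp add: boundary_len_def)

lemma boundary_walk_interior:
  "0 < i \<Longrightarrow> i < boundary_len l \<Longrightarrow> \<not> is_leaf ET (boundary_walk l i)"
  unfolding boundary_len_def using not_less_Least by force

lemma boundary_walk_is_path:
  assumes l: "is_leaf ET l"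
  shows "is_path ET (boundary_walk l) (boundary_len l)"
  using boundary_walk_edge[OF l] boundary_walk_no_backtrack[OF l] boundary_walk_interior
  by (intro nonbacktracking_walk_is_path) (auto simp: is_walk_def numeral_2_eq_2)

lemma next_leaf_is_leaf: "is_leaf ET l \<Longrightarrow> is_leaf ET (next_leaf ET rot l)"
  using boundary_walk_len_leaf by (simp add: next_leaf_eq)

lemma next_leaf_neq: "is_leaf ET l \<Longrightarrow> next_leaf ET rot l \<noteq> l"
  using is_path_inj[OF boundary_walk_is_path, of l "boundary_len l" 0] boundary_len_ge_1[of l]
  by (auto simp: next_leaf_eq boundary_walk_0)

lemma face_step_pow_dart:
  "ET (fst d) (snd d) \<Longrightarrow> ET (fst ((face_step rot ^^ k) d)) (snd ((face_step rot ^^ k) d))"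
  by (induction k) (auto simp: face_step_def rot_edge sym)

lemma face_step_inj:
  assumes "ET (fst d) (snd d)" "ET (fst e) (snd e)" "face_step rot d = face_step rot e"
  shows "d = e"
  using assms rot_inj[of "snd d" "fst d" "fst e"] sym
  by (cases d; cases e) (auto simp: face_step_def)

lemma face_step_pow_inj:
  assumes "ET (fst d) (snd d)" "ET (fst e) (snd e)"
    and "(face_step rot ^^ k) d = (face_step rot ^^ k) e"
  shows "d = e"
  using assms
proof (induction k)
  case (Suc k)
  then show ?case
    using face_step_inj[OF face_step_pow_dart face_step_pow_dart] by simp
qed simp

lemma face_step_pow_boundary_len:
  assumes l: "is_leaf ET l"
  shows "(face_step rot ^^ boundary_len l) (l, leaf_nbr l)
           = (next_leaf ET rot l, leaf_nbr (next_leaf ET rot l))"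
proof -
  let ?m = "next_leaf ET rot l"
  have "fst ((face_step rot ^^ boundary_len l) (l, leaf_nbr l)) = ?m"
    by (simp add: next_leaf_eq boundary_walk_def)
  moreover have "ET ?m (boundary_walk l (Suc (boundary_len l)))"
    using boundary_walk_edge[OF l, of "boundary_len l"] by (simp add: next_leaf_eq)
  then have "snd ((face_step rot ^^ boundary_len l) (l, leaf_nbr l)) = leaf_nbr ?m"
    using leaf_edge_imp_nbr[OF next_leaf_is_leaf[OF l]] by (simp add: snd_face_step_pow)
  ultimately show ?thesis by (simp add: prod_eq_iff)
qed

text \<open>Face steps are invertible on darts, so the walk of the leaf with the shorter walk is a
  suffix of the other walk, which has no inner leaves.\<close>

lemma next_leaf_inj_on: "inj_on (next_leaf ET rot) {l. is_leaf ET l}"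
proof -
  have "l1 = l2"
    if l: "is_leaf ET l1" "is_leaf ET l2" "next_leaf ET rot l1 = next_leaf ET rot l2"
      and le: "boundary_len l1 \<le> boundary_len l2" for l1 l2
  proof -
    define d where "d = boundary_len l2 - boundary_len l1"
    have "boundary_len l2 = boundary_len l1 + d" using le by (simp add: d_def)
    then have "(face_step rot ^^ boundary_len l1) ((face_step rot ^^ d) (l2, leaf_nbr l2))
        = (face_step rot ^^ boundary_len l2) (l2, leaf_nbr l2)"
      by (simp add: funpow_add)
    also have "\<dots> = (face_step rot ^^ boundary_len l1) (l1, leaf_nbr l1)"
      using face_step_pow_boundary_len l by simp
    finally have "(face_step rot ^^ boundary_len l1) (l1, leaf_nbr l1)
        = (face_step rot ^^ boundary_len l1) ((face_step rot ^^ d) (l2, leaf_nbr l2))" ..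
    moreover have "ET (fst ((face_step rot ^^ d) (l2, leaf_nbr l2)))
        (snd ((face_step rot ^^ d) (l2, leaf_nbr l2)))"
      by (rule face_step_pow_dart) (simp add: leaf_nbr_edge l)
    ultimately have "(l1, leaf_nbr l1) = (face_step rot ^^ d) (l2, leaf_nbr l2)"
      using face_step_pow_inj leaf_nbr_edge[OF l(1)] by (metis fst_conv snd_conv)
    then have "l1 = boundary_walk l2 d" by (simp add: boundary_walk_def prod_eq_iff)
    moreover have "d < boundary_len l2" using boundary_len_ge_1[OF l(1)] le by (simp add: d_def)
    ultimately show ?thesis
      using l(1) boundary_walk_interior[of d l2] by (cases "d = 0") (auto simp: boundary_walk_0)
  qed
  then show ?thesis by (metis (mono_tags) inj_onI mem_Collect_eq nat_le_linear)
qed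

lemma next_leaf_surj:
  assumes "is_leaf ET p"
  shows "\<exists>s. is_leaf ET s \<and> next_leaf ET rot s = p"
proof -
  let ?L = "{l \<in> V. is_leaf ET l}"
  have "inj_on (next_leaf ET rot) ?L"
    by (rule inj_on_subset[OF next_leaf_inj_on]) auto
  then have "next_leaf ET rot ` ?L = ?L"
    using finite_V next_leaf_is_leaf leaf_in_V by (intro endo_inj_surj) auto
  then show ?thesis using assms leaf_in_V by (metis (no_types, lifting) imageE mem_Collect_eq)
qed

lemma next_leaf_reachable_avoiding:
  assumes "is_leaf ET l" "x \<notin> boundary_walk l ` {..boundary_len l}"
  shows "(l, next_leaf ET rot l) \<in> (edges_avoiding ET x)\<^sup>*"
  using walk_avoiding[of ET "boundary_walk l" "boundary_len l" 0 "boundary_len l" x] assms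
    boundary_walk_is_path[OF assms(1)]
  by (auto simp: is_path_def boundary_walk_0 next_leaf_eq)
lemma reversed_boundary_segment_nbrs:
  assumes l: "is_leaf ET l" "is_leaf ET l'"
    and rev: "\<And>t. t \<le> b - a \<Longrightarrow> boundary_walk l' (k + t) = boundary_walk l (b - t)"
    and m: "a < m" "m < b"
  shows "nbrs ET (boundary_walk l m) = {boundary_walk l (m - 1), boundary_walk l (m + 1)}"
proof -
  let ?t = "k + (b - m - 1)"
  have l': "boundary_walk l' ?t = boundary_walk l (m + 1)"
    "boundary_walk l' (Suc ?t) = boundary_walk l m"
    "boundary_walk l' (Suc (Suc ?t)) = boundary_walk l (m - 1)"
    using rev[of "b - m - 1"] rev[of "b - m"] rev[of "Suc (b - m)"] m
    by (simp_all add: Suc_diff_Suc)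
  have m': "Suc (m - 1) = m" using m by simp
  show ?thesis
  proof (rule rot_swap_imp_nbrs)
    show "ET (boundary_walk l m) (boundary_walk l (m - 1))"
      using boundary_walk_edge[OF l(1), of "m - 1"] sym m' by metis
    show "ET (boundary_walk l m) (boundary_walk l (m + 1))"
      using boundary_walk_edge[OF l(1), of m] by simp
    show "rot (boundary_walk l m) (boundary_walk l (m - 1)) = boundary_walk l (m + 1)"
      using boundary_walk_Suc_Suc[of l "m - 1"] m' by simp
    show "rot (boundary_walk l m) (boundary_walk l (m + 1)) = boundary_walk l (m - 1)"
      using boundary_walk_Suc_Suc[of l' ?t] l' by simp
  qed
qed

end

context embedded_tree
begin

abbreviation H :: "'a \<Rightarrow> 'a \<Rightarrow> bool" where
  "H \<equiv> halin_edges ET rot"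

lemma halin_edge_if_tree_edge: "ET a b \<Longrightarrow> H a b"
  by (simp add: halin_edges_def)

lemma halin_edge_iff_tree_edge: "\<not> is_leaf ET a \<or> \<not> is_leaf ET b \<Longrightarrow> H a b \<longleftrightarrow> ET a b"
  by (auto simp: halin_edges_def cycle_edge_def)

lemma nbrs_halin_nonleaf: "\<not> is_leaf ET v \<Longrightarrow> nbrs H v = nbrs ET v"
  using halin_edge_iff_tree_edge by (auto simp: nbrs_def)

lemma simple_graph_halin: "simple_graph V H"
  using finite_V edge_in_V sym irrefl leaf_in_V next_leaf_neq
  by (auto simp: simple_graph_def halin_edges_def cycle_edge_def)

lemma halin_connected: "graph_connected V H"
proof -
  have "adj_rel ET \<subseteq> adj_rel H" by (auto simp: adj_rel_def halin_edges_def)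
  then show ?thesis
    using connected rtrancl_mono unfolding graph_connected_def by blast
qed

lemma halin_sym: "H a b \<Longrightarrow> H b a"
  using simple_graph_halin by (simp add: simple_graph_def)

lemma halin_reachable: "a \<in> V \<Longrightarrow> b \<in> V \<Longrightarrow> (a, b) \<in> (adj_rel H)\<^sup>*"
  using halin_connected by (simp add: graph_connected_def)

lemma lly_edge_halin: "H u v \<Longrightarrow> lly_edge V H u v"
  using simple_graph_halin by (simp add: lly_edge_def)

lemma nbrs_halin_leaf:
  assumes p: "is_leaf ET p" and s: "is_leaf ET s" and sp: "next_leaf ET rot s = p"
  shows "nbrs H p = {leaf_nbr p, next_leaf ET rot p, s}"
proof
  show "nbrs H p \<subseteq> {leaf_nbr p, next_leaf ET rot p, s}"
  proof
    fix w assume "w \<in> nbrs H p"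
    then have "ET p w \<or> cycle_edge ET rot p w" by (simp add: nbrs_def halin_edges_def)
    then show "w \<in> {leaf_nbr p, next_leaf ET rot p, s}"
    proof
      assume "cycle_edge ET rot p w"
      then have "is_leaf ET w" "next_leaf ET rot p = w \<or> next_leaf ET rot w = p"
        by (auto simp: cycle_edge_def)
      then show ?thesis using inj_onD[OF next_leaf_inj_on, of w s] s sp by auto
    qed (use leaf_edge_imp_nbr[OF p] in simp)
  qed
  show "{leaf_nbr p, next_leaf ET rot p, s} \<subseteq> nbrs H p"
    using leaf_nbr_edge[OF p] p s sp next_leaf_is_leaf[OF p]
    by (auto simp: nbrs_def halin_edges_def cycle_edge_def)
qed

lemma halin_path_edge: "is_path ET f n \<Longrightarrow> t < n \<Longrightarrow> H (f t) (f (Suc t))"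
  using halin_edge_if_tree_edge by (simp add: is_path_def is_walk_def)

lemma halin_non_edge_on_path:
  assumes p: "is_path ET f n" and inner: "\<And>t. 0 < t \<Longrightarrow> t < n \<Longrightarrow> \<not> is_leaf ET (f t)"
    and ab: "a \<le> n" "b \<le> n" "b \<noteq> Suc a" "a \<noteq> Suc b"
    and not_ends: "\<not> (a = 0 \<and> b = n)" "\<not> (a = n \<and> b = 0)"
  shows "\<not> H (f a) (f b)"
proof
  assume e: "H (f a) (f b)"
  show False
  proof (cases "ET (f a) (f b)")
    case True
    then show False using path_no_chord[OF p ab(1,2)] ab(3,4) by blast
  next
    case False
    then have "is_leaf ET (f a)" "is_leaf ET (f b)" "a \<noteq> b"
      using e halin_edge_iff_tree_edge simple_graph_halin by (auto simp: simple_graph_def)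
    then show False using inner ab(1,2) not_ends by (metis le_neq_implies_less neq0_conv)
  qed
qed

lemma kappa_LLY_nonpos_before_degree_two_run:
  assumes p: "is_path ET f n" and inner: "\<And>t. 0 < t \<Longrightarrow> t < n \<Longrightarrow> \<not> is_leaf ET (f t)"
    and j: "0 < j" "j + 3 \<le> n" "5 \<le> n"
    and deg1: "nbrs ET (f (j + 1)) = {f j, f (j + 2)}"
    and deg2: "nbrs ET (f (j + 2)) = {f (j + 1), f (j + 3)}"
  shows "kappa_LLY V H (f j) (f (j + 1)) \<le> 0"
proof -
  have non_edges: "\<not> H (f j) (f (j + 2))" "\<not> H (f j) (f (j + 3))"
    "\<not> H (f (j - 1)) (f (j + 1))" "\<not> H (f (j - 1)) (f (j + 2))" "\<not> H (f (j - 1)) (f (j + 3))"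
    by (rule halin_non_edge_on_path[OF p inner]; use j in linarith)+
  have f_ne: "f a \<noteq> f b" if "a \<le> n" "b \<le> n" "a \<noteq> b" for a b
    using is_path_inj[OF p] that by blast
  have distinct: "f j \<noteq> f (j + 2)" "f (j - 1) \<noteq> f (j + 1)" "f (j - 1) \<noteq> f (j + 2)"
    by (rule f_ne; use j in linarith)+
  have f_in_V: "f t \<in> V" if "t \<le> n" for t
    using walk_in_V[of f n t] p that j by (simp add: is_path_def)
  have "nbrs H (f (j + 2)) = {f (j + 1), f (j + 3)}"
    using deg2 nbrs_halin_nonleaf inner[of "j + 2"] j by simp
  then have into2: "a = f (j + 1) \<or> a = f (j + 3)" if "H a (f (j + 2))" for a
    using that halin_sym by (auto simp: nbrs_def)
  have "H (f j) (f (j + 1))" using halin_path_edge[OF p, of j] j by simp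
  interpret e: lly_edge V H "f j" "f (j + 1)" by (rule lly_edge_halin) fact
  show ?thesis
  proof (rule e.kappa_LLY_nonpos_degree_two_endpoint[where v' = "f (j + 2)" and u' = "f (j - 1)",
        OF halin_connected])
    show "nbrs H (f (j + 1)) = {f j, f (j + 2)}"
      using deg1 nbrs_halin_nonleaf inner[of "j + 1"] j by simp
    show "2 \<le> gdist H (f j) (f (j + 2))"
      using j distinct non_edges by (intro gdist_ge_2 halin_reachable f_in_V) auto
    show "f (j - 1) \<in> nbrs H (f j)"
      using halin_path_edge[OF p, of "j - 1"] halin_sym j by (simp add: nbrs_def)
    show "f (j - 1) \<noteq> f (j + 1)" by (fact distinct)
    show "3 \<le> gdist H (f (j - 1)) (f (j + 2))"
      using j distinct non_edges into2 by (intro gdist_ge_3 halin_reachable f_in_V) auto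
    show "2 \<le> gdist H w (f (j + 2))" if "w \<in> nbrs H (f j)" "w \<noteq> f (j + 1)" for w
    proof (rule gdist_ge_2)
      have "H (f j) w" using that by (simp add: nbrs_def)
      then show "w \<noteq> f (j + 2)" "\<not> H w (f (j + 2))"
        using into2[of w] that non_edges by auto
      show "(w, f (j + 2)) \<in> (adj_rel H)\<^sup>*"
        using \<open>H (f j) w\<close> simple_graph_halin j f_in_V
        by (intro halin_reachable) (auto simp: simple_graph_def)
    qed
  qed
qed

end

section \<open>A cycle edge separated by a vertex of maximum degree\<close>

locale separated_cycle_edge = embedded_tree +
  fixes x p s :: 'a
  assumes deg_x: "3 \<le> deg ET x"
    and p_leaf: "is_leaf ET p" and s_leaf: "is_leaf ET s" and s_next: "next_leaf ET rot s = p"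
    and separated: "(p, next_leaf ET rot p) \<notin> (edges_avoiding ET x)\<^sup>*"
    and positive: "\<And>u v. H u v \<Longrightarrow> 0 < kappa_LLY V H u v"
begin

text \<open>The leaves \<open>s, p, q, r\<close> are consecutive on the cycle; \<open>C\<close>, \<open>W\<close> and \<open>B\<close> are the tree
  paths walked by the boundary between them.\<close>

abbreviation "q \<equiv> next_leaf ET rot p"
abbreviation "r \<equiv> next_leaf ET rot q"
abbreviation "W \<equiv> boundary_walk p"
abbreviation "n \<equiv> boundary_len p"
abbreviation "B \<equiv> boundary_walk q"
abbreviation "nB \<equiv> boundary_len q"
abbreviation "C \<equiv> boundary_walk s"
abbreviation "nC \<equiv> boundary_len s"

lemma q_leaf: "is_leaf ET q" and r_leaf: "is_leaf ET r"
  using next_leaf_is_leaf p_leaf by blast+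

lemma W_ends: "W 0 = p" "W n = q"
  and B_ends: "B 0 = q" "B nB = r"
  and C_ends: "C 0 = s" "C nC = p"
  using s_next by (simp_all add: boundary_walk_0 next_leaf_eq)

lemma W_path: "is_path ET W n" and B_path: "is_path ET B nB" and C_path: "is_path ET C nC"
  using boundary_walk_is_path p_leaf q_leaf s_leaf by blast+

lemma x_not_leaf: "\<not> is_leaf ET x"
  using deg_x by (simp add: is_leaf_def)

lemma x_on_W: "\<exists>j. 0 < j \<and> j < n \<and> W j = x"
proof -
  have "x \<in> W ` {..n}"
  proof (rule ccontr)
    assume "x \<notin> W ` {..n}"
    then have "(W 0, W n) \<in> (edges_avoiding ET x)\<^sup>*"
      using W_path by (intro walk_avoiding[of ET W n]) (auto simp: is_path_def)
    then show False using separated W_ends by simp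
  qed
  then obtain j where "j \<le> n" "W j = x" by auto
  moreover have "W 0 \<noteq> x" "W n \<noteq> x" using W_ends p_leaf q_leaf x_not_leaf by auto
  then have "j \<noteq> 0" "j \<noteq> n" using \<open>W j = x\<close> by metis+
  ultimately show ?thesis by auto
qed

definition j :: nat where "j = (SOME j. 0 < j \<and> j < n \<and> W j = x)"

lemma x_at_j: "0 < j" "j < n" "W j = x"
  using someI_ex[OF x_on_W] unfolding j_def by auto

lemma W_inner: "0 < i \<Longrightarrow> i < n \<Longrightarrow> \<not> is_leaf ET (W i)"
  by (rule boundary_walk_interior)

lemma B_reverses_W:
  assumes "k \<le> nB" "i \<le> n" "B k = W i"
  shows "k = n - i" "\<And>t. t \<le> n - i \<Longrightarrow> B t = W (n - t)"
proof -
  have "is_path ET (\<lambda>t. W (n - t)) n" by (rule is_path_rev[OF W_path sym])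
  then have "is_path ET (\<lambda>t. W (n - t)) (n - i)" by (rule is_path_restrict) simp
  moreover have "is_path ET B k" using is_path_restrict[OF B_path assms(1)] .
  ultimately have "k = n - i \<and> (\<forall>t\<le>k. B t = W (n - t))"
    using path_unique[of B k "\<lambda>t. W (n - t)" "n - i"] assms W_ends B_ends by simp
  then show "k = n - i" "\<And>t. t \<le> n - i \<Longrightarrow> B t = W (n - t)" by auto
qed

lemma C_reverses_W:
  assumes "k \<le> nC" "i \<le> n" "C k = W i"
  shows "\<And>t. t \<le> i \<Longrightarrow> C (k + t) = W (i - t)"
proof -
  have "is_path ET (\<lambda>t. C (nC - t)) nC" by (rule is_path_rev[OF C_path sym])
  then have "is_path ET (\<lambda>t. C (nC - t)) (nC - k)" by (rule is_path_restrict) simp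
  moreover have "is_path ET W i" using is_path_restrict[OF W_path assms(2)] .
  ultimately have "nC - k = i \<and> (\<forall>t\<le>nC - k. C (nC - t) = W t)"
    using path_unique[of "\<lambda>t. C (nC - t)" "nC - k" W i] assms W_ends C_ends by simp
  moreover have "nC - (i - t) = k + t" if "t \<le> i" "nC - k = i" for t
    using that assms(1) by linarith
  ultimately show "\<And>t. t \<le> i \<Longrightarrow> C (k + t) = W (i - t)"
    by (metis diff_le_self)
qed

text \<open>Where the boundary walks \<open>B\<close> or \<open>C\<close> retrace \<open>W\<close> backwards, the boundary passes on both
  sides of the retraced vertices, so they have degree two; hence \<open>x\<close> cannot be retraced.\<close>

lemma nbrs_W_after_B_meets:
  assumes "k \<le> nB" "i \<le> n" "B k = W i" "i < m" "m < n"
  shows "nbrs ET (W m) = {W (m - 1), W (m + 1)}"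
  using reversed_boundary_segment_nbrs[OF p_leaf q_leaf, of n i 0 m]
    B_reverses_W(2)[OF assms(1-3)] assms(4,5)
  by simp

lemma nbrs_W_before_C_meets:
  assumes "k \<le> nC" "i \<le> n" "C k = W i" "0 < m" "m < i"
  shows "nbrs ET (W m) = {W (m - 1), W (m + 1)}"
  using reversed_boundary_segment_nbrs[OF p_leaf s_leaf, of i 0 k m]
    C_reverses_W[OF assms(1-3)] assms(4,5)
  by simp

lemma nbrs_x_ne_pair: "nbrs ET x \<noteq> {a, b}"
proof
  assume "nbrs ET x = {a, b}"
  then have "deg ET x \<le> 2" by (simp add: deg_def card_insert_le_m1)
  then show False using deg_x by simp
qed

lemma B_meets_W_after_x:
  assumes "k \<le> nB" "i \<le> n" "B k = W i"
  shows "j \<le> i"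
proof (rule ccontr)
  assume "\<not> j \<le> i"
  then have "nbrs ET x = {W (j - 1), W (j + 1)}"
    using nbrs_W_after_B_meets[OF assms, of j] x_at_j by simp
  then show False using nbrs_x_ne_pair by blast
qed

lemma C_meets_W_before_x:
  assumes "k \<le> nC" "i \<le> n" "C k = W i"
  shows "i \<le> j"
proof (rule ccontr)
  assume "\<not> i \<le> j"
  then have "nbrs ET x = {W (j - 1), W (j + 1)}"
    using nbrs_W_before_C_meets[OF assms, of j] x_at_j by simp
  then show False using nbrs_x_ne_pair by blast
qed

lemma W_edge: "H (W i) (W (Suc i))"
  using boundary_walk_edge[OF p_leaf] halin_edge_if_tree_edge by blast

lemma short_after_x_if_x_on_B:
  assumes "x \<in> B ` {..nB}" "5 \<le> n"
  shows "n \<le> j + 2"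
proof (rule ccontr)
  assume "\<not> n \<le> j + 2"
  obtain k where k: "k \<le> nB" "B k = W j" using assms(1) x_at_j by auto
  have "nbrs ET (W (j + 1)) = {W j, W (j + 2)}" "nbrs ET (W (j + 2)) = {W (j + 1), W (j + 3)}"
    using nbrs_W_after_B_meets[OF k(1) _ k(2), of "j + 1"]
      nbrs_W_after_B_meets[OF k(1) _ k(2), of "j + 2"] x_at_j \<open>\<not> n \<le> j + 2\<close>
    by (simp_all add: numeral_2_eq_2 numeral_3_eq_3)
  then have "kappa_LLY V H (W j) (W (j + 1)) \<le> 0"
    using \<open>\<not> n \<le> j + 2\<close> x_at_j assms(2)
    by (intro kappa_LLY_nonpos_before_degree_two_run[OF W_path W_inner]) auto
  then show False using positive[OF W_edge[of j]] by simp
qed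

lemma short_before_x_if_x_on_C:
  assumes "x \<in> C ` {..nC}" "5 \<le> n"
  shows "j \<le> 2"
proof (rule ccontr)
  assume "\<not> j \<le> 2"
  obtain k where k: "k \<le> nC" "C k = W j" using assms(1) x_at_j by auto
  have idx: "j - 1 - 1 = j - 2" "j - 1 + 1 = j" "j - 2 - 1 = j - 3" "j - 2 + 1 = j - 1"
    using \<open>\<not> j \<le> 2\<close> by auto
  have "nbrs ET (W (j - 1)) = {W (j - 2), W j}" "nbrs ET (W (j - 2)) = {W (j - 3), W (j - 1)}"
    using nbrs_W_before_C_meets[OF k(1) _ k(2), of "j - 1"]
      nbrs_W_before_C_meets[OF k(1) _ k(2), of "j - 2"] x_at_j \<open>\<not> j \<le> 2\<close>
    unfolding idx by auto
  moreover have "n - (n - j) = j" "n - (n - j + 1) = j - 1" "n - (n - j + 2) = j - 2"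
    "n - (n - j + 3) = j - 3"
    using x_at_j \<open>\<not> j \<le> 2\<close> by auto
  ultimately have "kappa_LLY V H (W (n - (n - j))) (W (n - (n - j + 1))) \<le> 0"
    using \<open>\<not> j \<le> 2\<close> x_at_j assms(2) W_inner
    by (intro kappa_LLY_nonpos_before_degree_two_run[OF is_path_rev[OF W_path sym]])
      (auto simp: insert_commute)
  moreover have "H (W j) (W (j - 1))"
    using W_edge[of "j - 1"] simple_graph_halin x_at_j by (auto simp: simple_graph_def)
  ultimately show False using positive \<open>n - (n - j) = j\<close> \<open>n - (n - j + 1) = j - 1\<close> by fastforce
qed

abbreviation avoiding_x :: "('a \<times> 'a) set" where
  "avoiding_x \<equiv> (edges_avoiding ET x)\<^sup>*"

lemma W_segment_avoiding_x:
  "a \<le> b \<Longrightarrow> b \<le> n \<Longrightarrow> b < j \<or> j < a \<Longrightarrow> (W a, W b) \<in> avoiding_x"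
  using path_segment_avoiding[OF W_path, of a b j] x_at_j by simp

lemma x_on_B_or_C_if_s_eq_r:
  assumes "s = r"
  shows "x \<in> B ` {..nB} \<or> x \<in> C ` {..nC}"
proof (rule ccontr)
  assume "\<not> ?thesis"
  then have "(q, r) \<in> avoiding_x" "(s, p) \<in> avoiding_x"
    using next_leaf_reachable_avoiding q_leaf s_leaf s_next by auto
  then have "(q, p) \<in> avoiding_x" using assms by simp
  then show False using separated rtrancl_edges_avoiding_sym[OF symp] by blast
qed

lemma x_on_C_if_on_B:
  assumes "s = r" and "x \<in> B ` {..nB}"
  shows "x \<in> C ` {..nC}"
proof (rule ccontr)
  assume not_C: "x \<notin> C ` {..nC}"
  obtain k where k: "k \<le> nB" "B k = x" using assms(2) by auto
  have "k \<noteq> nB" using k B_ends r_leaf x_not_leaf by auto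
  have "(B (Suc k), r) \<in> avoiding_x"
    using path_segment_avoiding[OF B_path, of "Suc k" nB k] k \<open>k \<noteq> nB\<close> B_ends by simp
  also have "(r, p) \<in> avoiding_x"
    using next_leaf_reachable_avoiding[OF s_leaf not_C] assms(1) s_next by simp
  also have "(p, W (j - 1)) \<in> avoiding_x"
    using W_segment_avoiding_x[of 0 "j - 1"] x_at_j W_ends by simp
  finally have "(B (Suc k), W (j - 1)) \<in> avoiding_x" .
  moreover have "ET x (B (Suc k))" using boundary_walk_edge[OF q_leaf, of k] k by simp
  moreover have "ET x (W (j - 1))"
    using sym[OF boundary_walk_edge[OF p_leaf, of "j - 1"]] x_at_j by simp
  ultimately have "B (Suc k) = W (j - 1)" using nbrs_separated by blast
  moreover have "Suc k \<le> nB" "j - 1 \<le> n" using k \<open>k \<noteq> nB\<close> x_at_j by auto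
  ultimately have "j \<le> j - 1" using B_meets_W_after_x[of "Suc k" "j - 1"] by blast
  then show False using x_at_j by simp
qed

lemma x_on_B_if_on_C:
  assumes "s = r" and "x \<in> C ` {..nC}"
  shows "x \<in> B ` {..nB}"
proof (rule ccontr)
  assume not_B: "x \<notin> B ` {..nB}"
  obtain k where k: "k \<le> nC" "C k = x" using assms(2) by auto
  have "k \<noteq> 0"
  proof
    assume "k = 0"
    then have "x = s" using k(2) C_ends(1) by simp
    then show False using s_leaf x_not_leaf by simp
  qed
  have C_part: "(s, C (k - 1)) \<in> avoiding_x"
    using path_segment_avoiding[OF C_path, of 0 "k - 1" k] k \<open>k \<noteq> 0\<close> C_ends by simp
  have "(W (j + 1), q) \<in> avoiding_x"
    using W_segment_avoiding_x[of "j + 1" n] x_at_j W_ends by simp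
  also have "(q, s) \<in> avoiding_x"
    using next_leaf_reachable_avoiding[OF q_leaf not_B] assms(1) by simp
  also note C_part
  finally have "(W (j + 1), C (k - 1)) \<in> avoiding_x" .
  moreover have "ET x (W (j + 1))" using boundary_walk_edge[OF p_leaf, of j] x_at_j by simp
  moreover have "ET x (C (k - 1))"
    using sym[OF boundary_walk_edge[OF s_leaf, of "k - 1"]] k \<open>k \<noteq> 0\<close> by simp
  ultimately have "W (j + 1) = C (k - 1)" using nbrs_separated by blast
  moreover have "k - 1 \<le> nC" "j + 1 \<le> n" using k(1) x_at_j(2) by auto
  ultimately have "j + 1 \<le> j" using C_meets_W_before_x by (metis)
  then show False by simp
qed

lemma x_on_B_if_W1_adj_r:
  assumes "ET (W 1) r"
  shows "j = 1" "x \<in> B ` {..nB}"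
proof -
  have "1 \<le> nB" by (rule boundary_len_ge_1[OF q_leaf])
  then have "ET r (B (nB - 1))"
    using sym[OF boundary_walk_edge[OF q_leaf, of "nB - 1"]] B_ends by simp
  moreover have "ET r (W 1)" using sym[OF assms] .
  ultimately have "B (nB - 1) = W 1" using leaf_edge_imp_nbr[OF r_leaf] by metis
  then have "j \<le> 1" using B_meets_W_after_x[of "nB - 1" 1] x_at_j by simp
  then show "j = 1" using x_at_j by simp
  with \<open>B (nB - 1) = W 1\<close> have "B (nB - 1) = x" using x_at_j by simp
  then show "x \<in> B ` {..nB}" by (metis atMost_iff diff_le_self image_eqI)
qed

lemma x_on_C_if_Wn1_adj_s:
  assumes "ET (W (n - 1)) s"
  shows "j = n - 1" "x \<in> C ` {..nC}"
proof -
  have "1 \<le> nC" by (rule boundary_len_ge_1[OF s_leaf])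
  have "W (n - 1) = leaf_nbr s" using leaf_edge_imp_nbr[OF s_leaf sym[OF assms]] .
  then have "C 1 = W (n - 1)" by (simp add: boundary_walk_1)
  then have "n - 1 \<le> j" using C_meets_W_before_x[of 1 "n - 1"] \<open>1 \<le> nC\<close> by simp
  then show "j = n - 1" using x_at_j by simp
  with \<open>C 1 = W (n - 1)\<close> have "C 1 = x" using x_at_j by simp
  then show "x \<in> C ` {..nC}" using \<open>1 \<le> nC\<close> by (metis atMost_iff image_eqI)
qed

lemma W_no_edge:
  assumes "a \<le> n" "b \<le> n" "b \<noteq> Suc a" "a \<noteq> Suc b" "\<not> (a = 0 \<and> b = n)" "\<not> (a = n \<and> b = 0)"
  shows "\<not> H (W a) (W b)"
  by (rule halin_non_edge_on_path[OF W_path W_inner assms])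

lemma r_ne_p: "r \<noteq> p"
  using B_meets_W_after_x[of nB 0] B_ends W_ends x_at_j by auto

lemma s_ne_q: "s \<noteq> q"
  using C_meets_W_before_x[of 0 n] C_ends W_ends x_at_j by auto

lemma nbrs_halin_p: "nbrs H p = {W 1, q, s}"
  using nbrs_halin_leaf[OF p_leaf s_leaf s_next] boundary_walk_1[of p] by simp

lemma nbrs_halin_q: "1 \<le> n \<Longrightarrow> nbrs H q = {W (n - 1), r, p}"
  using nbrs_halin_leaf[OF q_leaf p_leaf refl] leaf_edge_imp_nbr[OF q_leaf]
    sym[OF boundary_walk_edge[OF p_leaf, of "n - 1"]] W_ends
  by simp

lemma kappa_LLY_p_q_nonpos:
  assumes n: "5 \<le> n" and "s \<noteq> r" and a_r: "\<not> ET (W 1) r" and b_s: "\<not> ET (W (n - 1)) s"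
  shows "kappa_LLY V H p q \<le> 0"
proof -
  let ?a = "W 1" and ?b = "W (n - 1)"
  have inner: "\<not> is_leaf ET ?a" "\<not> is_leaf ET ?b" using W_inner n by auto
  have W_in_V: "W t \<in> V" for t using boundary_walk_in_V[OF p_leaf] .
  have "?a \<noteq> ?b" using is_path_inj[OF W_path, of 1 "n - 1"] n by auto
  have "H p q" using p_leaf q_leaf by (simp add: halin_edges_def cycle_edge_def)
  interpret e: lly_edge V H p q by (rule lly_edge_halin) fact
  show ?thesis
  proof (rule e.kappa_LLY_nonpos_degree_three_edge[OF halin_connected W_in_V W_in_V
        leaf_in_V[OF s_leaf] leaf_in_V[OF r_leaf] _ nbrs_halin_p nbrs_halin_q])
    show "distinct [p, q, ?a, ?b, s, r]"
      using inner p_leaf q_leaf s_leaf r_leaf next_leaf_neq[OF p_leaf] next_leaf_neq[OF q_leaf]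
        next_leaf_neq[OF s_leaf] s_next r_ne_p s_ne_q \<open>s \<noteq> r\<close> \<open>?a \<noteq> ?b\<close> by auto
    show "2 \<le> gdist H ?a q"
      using W_no_edge[of 1 n] n inner q_leaf W_ends
      by (intro gdist_ge_2 halin_reachable W_in_V leaf_in_V) auto
    show "2 \<le> gdist H ?a r"
      using halin_edge_iff_tree_edge[of ?a r] a_r inner r_leaf
      by (intro gdist_ge_2 halin_reachable W_in_V leaf_in_V) auto
    show "3 \<le> gdist H ?a ?b"
    proof (rule gdist_ge_3[OF halin_reachable[OF W_in_V W_in_V] \<open>?a \<noteq> ?b\<close>])
      show "\<not> H ?a ?b" using W_no_edge[of 1 "n - 1"] n by simp
      show False if "H ?a z" "H z ?b" for z
      proof -
        have "ET ?a z" "ET z ?b" using that inner halin_edge_iff_tree_edge by auto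
        moreover have "1 + 3 \<le> n - 1" "n - 1 \<le> n" using n by linarith+
        ultimately show False using path_far_no_common_nbr[OF W_path] by blast
      qed
    qed
    show "2 \<le> gdist H p ?b"
      using W_no_edge[of 0 "n - 1"] n inner p_leaf W_ends
      by (intro gdist_ge_2 halin_reachable W_in_V leaf_in_V) auto
    show "2 \<le> gdist H s ?b"
      using halin_edge_iff_tree_edge[of s ?b] b_s sym inner s_leaf
      by (intro gdist_ge_2 halin_reachable W_in_V leaf_in_V) auto
  qed (use n in simp)
qed

lemma boundary_len_le_4: "n \<le> 4"
proof (rule ccontr)
  assume "\<not> n \<le> 4"
  then have n: "5 \<le> n" by simp
  consider "s = r" | "ET (W 1) r" | "ET (W (n - 1)) s"
    | "s \<noteq> r" "\<not> ET (W 1) r" "\<not> ET (W (n - 1)) s" by blast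
  then show False
  proof cases
    case 1
    then have "x \<in> B ` {..nB}" "x \<in> C ` {..nC}"
      using x_on_B_or_C_if_s_eq_r x_on_B_if_on_C x_on_C_if_on_B by blast+
    then show False using short_after_x_if_x_on_B short_before_x_if_x_on_C n by fastforce
  next
    case 2
    then show False using x_on_B_if_W1_adj_r short_after_x_if_x_on_B n by fastforce
  next
    case 3
    then show False using x_on_C_if_Wn1_adj_s short_before_x_if_x_on_C n by fastforce
  next
    case 4
    moreover have "H p q" using p_leaf q_leaf by (simp add: halin_edges_def cycle_edge_def)
    ultimately show False using kappa_LLY_p_q_nonpos positive n by fastforce
  qed
qed

lemma gdist_sum_le_4: "gdist ET x p + gdist ET x q \<le> 4"
proof -
  have "is_walk ET (\<lambda>t. W (j - t)) j"
    using is_path_rev[OF is_path_restrict[OF W_path], of j] x_at_j sym by (simp add: is_path_def)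
  then have "gdist ET x p \<le> j" using gdist_le_walk_length x_at_j W_ends by fastforce
  moreover have "is_walk ET (\<lambda>t. W (j + t)) (n - j)"
    using is_path_shift[OF W_path, of j n] x_at_j by (simp add: is_path_def)
  then have "gdist ET x q \<le> n - j" using gdist_le_walk_length x_at_j W_ends by fastforce
  ultimately show ?thesis using boundary_len_le_4 x_at_j by linarith
qed

end

lemma (in embedded_tree) gdist_sum_le_4_if_next_leaf:
  assumes "3 \<le> deg ET x" and p: "is_leaf ET p" and q: "next_leaf ET rot p = q"
    and "(p, q) \<notin> (edges_avoiding ET x)\<^sup>*"
    and "\<And>u v. H u v \<Longrightarrow> 0 < kappa_LLY V H u v"
  shows "gdist ET x p + gdist ET x q \<le> 4"
proof -
  obtain s where "is_leaf ET s" "next_leaf ET rot s = p" using next_leaf_surj[OF p] by blast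
  then interpret separated_cycle_edge V ET rot x p s
    using assms by unfold_locales auto
  show ?thesis using gdist_sum_le_4 q by simp
qed

theorem lemma3p2:
  fixes V :: "'a set" and ET :: "'a \<Rightarrow> 'a \<Rightarrow> bool" and rot :: "'a \<Rightarrow> 'a \<Rightarrow> 'a"
    and x p q :: 'a
  assumes "gen_halin V ET rot"
    and "\<forall>u v. halin_edges ET rot u v \<longrightarrow> kappa_LLY V (halin_edges ET rot) u v > 0"
    and "x \<in> V" and "deg ET x = max_deg V ET"
    and "cycle_edge ET rot p q"
    and "(p, q) \<notin> {(a, b). ET a b \<and> a \<noteq> x \<and> b \<noteq> x}\<^sup>*"
  shows "gdist ET x p + gdist ET x q \<le> 4"
proof -
  interpret embedded_tree V ET rot
    using assms(1) by unfold_locales (auto simp: gen_halin_def)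
  have deg: "3 \<le> deg ET x" using assms(1,4) by (simp add: gen_halin_def)
  have sep: "(p, q) \<notin> (edges_avoiding ET x)\<^sup>*" "(q, p) \<notin> (edges_avoiding ET x)\<^sup>*"
    using assms(6) rtrancl_edges_avoiding_sym[OF symp] by (auto simp: edges_avoiding_def)
  have "is_leaf ET p" "is_leaf ET q" "next_leaf ET rot p = q \<or> next_leaf ET rot q = p"
    using assms(5) by (auto simp: cycle_edge_def)
  then show ?thesis
    using gdist_sum_le_4_if_next_leaf[OF deg] sep assms(2) by (metis add.commute)
qed

end
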